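(* Assume (A1)–(A3), (B') and (C). (i) For every $n\ge3$, all $u_i,v_i\in\mathbf h$ and $\epsilon_i\in\mathbb Z_2$, $\lim_{t\to0}\frac1t\langle\Omega,(U^{(\epsilon_1)}_t-1)(u_1,v_1)\cdots(U^{(\epsilon_n)}_t-1)(u_n,v_n)\Omega\rangle=0$. (ii) For $u\in\mathbf h$, $v\in\mathcal D(G)$, product vectors $\underline p,\underline w\in\mathbf h^{\otimes n}$, $\epsilon\in\mathbb Z_2$, $\underline\epsilon'\in\mathbb Z_2^n$: $\lim_{t\to0}\frac1t\langle(U^{(\epsilon)}_t-1)(u,v)\Omega,(U^{(\underline\epsilon')}_t-1)(\underline p,\underline w)\Omega\rangle=(-1)^\epsilon\lim_{t\to0}\frac1t\langle(U_t-1)(u,v)\Omega,(U^{(\underline\epsilon')}_t-1)(\underline p,\underline w)\Omega\rangle$ (meaning: one side exists iff the other does, and they are then equal).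
   Context: All Hilbert spaces are complex and separable, with inner products antilinear in the first variable. Let $\mathbf h,\mathcal H$ be Hilbert spaces and $\Omega\in\mathcal H$ a fixed unit vector. For $A\in\mathcal B(\mathbf h\otimes\mathcal H)$ and $u,v\in\mathbf h$, the operator $A(u,v)\in\mathcal B(\mathcal H)$ is defined by $\langle\xi_1,A(u,v)\xi_2\rangle=\langle u\otimes\xi_1,A\,(v\otimes\xi_2)\rangle$ for all $\xi_1,\xi_2\in\mathcal H$; the same definition is used with $\mathbf h$ replaced by $\mathbf h^{\otimes n}$. Let $\{U_{s,t}:0\le s\le t<\infty\}$ be unitary operators on $\mathbf h\otimes\mathcal H$, $U_t:=U_{0,t}$, $U^{(0)}_{s,t}:=U_{s,t}$, $U^{(1)}_{s,t}:=U_{s,t}^*$. For $n\ge1$, $1\le k\le n$, $\epsilon\in\mathbb Z_2=\{0,1\}$, let $U^{(n,\epsilon)}_{s,t;k}$ be the operator on $\mathbf h^{\otimes n}\otimes\mathcal H$ acting as $U^{(\epsilon)}_{s,t}$ on (the $k$-th copy of $\mathbf h$)$\otimes\mathcal H$ and as the identity on the other copies of $\mathbf h$. For $\underline\epsilon\in\mathbb Z_2^n$ and $0\le s_1\le t_1\le s_2\le\dots\le s_n\le t_n$ put $U^{(\underline\epsilon)}_{\underline s,\underline t}:=U^{(n,\epsilon_1)}_{s_1,t_1;1}\cdots U^{(n,\epsilon_n)}_{s_n,t_n;n}$, so that for product vectors $\underline u=\otimes_iu_i$, $\underline v=\otimes_iv_i$ one has $U^{(\underline\epsilon)}_{\underline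 s,\underline t}(\underline u,\underline v)=\prod_{k=1}^nU^{(\epsilon_k)}_{s_k,t_k}(u_k,v_k)$ (ordered product). Write $U^{(\underline\epsilon)}_{s,t}$ when all $s_k=s$, $t_k=t$, and $U^{(n)}_t$ when moreover $s=0$, $\underline\epsilon=\underline0$. Assumptions: (A1) $U_{r,s}U_{s,t}=U_{r,t}$ for $r\le s\le t$. (A2) If $[s_1,t_1)\cap[s_2,t_2)=\emptyset$ then (i) $U_{s_1,t_1}(u_1,v_1)$ commutes with $U_{s_2,t_2}(u_2,v_2)$ and $U_{s_2,t_2}(u_2,v_2)^*$ for all $u_i,v_i\in\mathbf h$; (ii) for time tuples $\underline a,\underline b$ with $s_1\le a_1\le b_1\le\dots\le a_n\le b_n\le t_1$ and $\underline q,\underline r$ with $s_2\le q_1\le r_1\le\dots\le q_m\le r_m\le t_2$, product vectors $\underline u,\underline v\in\mathbf h^{\otimes n}$, $\underline p,\underline w\in\mathbf h^{\otimes m}$, and $\underline\epsilon\in\mathbb Z_2^n,\underline\epsilon'\in\mathbb Z_2^m$: $\langle\Omega,U^{(\underline\epsilon)}_{\underline a,\underline b}(\underline u,\underline v)U^{(\underline\epsilon')}_{\underline q,\underline r}(\underline p,\underline w)\Omega\rangle=\langle\Omega,U^{(\underline\epsilon)}_{\underline a,\underline b}(\underline u,\underline v)\Omega\rangle\langle\Omega,U^{(\underline\epsilon')}_{\underline q,\underline r}(\underline p,\underline w)\Omega\rangle$. (A3) $\langle\Omega,U^{(\underline\epsilon)}_{s,t}(\underline u,\underline v)\Omega\rangle=\langle\Omega,U^{(\underline\epsilon)}_{0,t-s}(\underline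 u,\underline v)\Omega\rangle$. (B') $\lim_{t\to0}\langle\Omega,(U_t-1)(u,v)\Omega\rangle=0$ for all $u,v\in\mathbf h$. (C) For all $u_i,v_i\in\mathbf h$, $\epsilon_i\in\mathbb Z_2$ ($i=1,2,3$): $\lim_{t\to0}\frac1t\langle\Omega,(U^{(\epsilon_1)}_t-1)(u_1,v_1)(U^{(\epsilon_2)}_t-1)(u_2,v_2)(U^{(\epsilon_3)}_t-1)(u_3,v_3)\Omega\rangle=0$. $T_t$ is the operator on $\mathbf h$ with $\langle u,T_tv\rangle=\langle\Omega,U_t(u,v)\Omega\rangle$; it is a strongly continuous contraction semigroup and $G$ denotes its generator, with domain $\mathcal D(G)$. *)

theory Defs
  imports "HOL-Analysis.Analysis"
begin

text \<open>Concrete model of separable complex Hilbert spaces: l2 over a countable index type.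
  h = l2('a), H = l2('b), the tensor product h \<otimes> H = l2('a \<times> 'b).
  Inner products are antilinear in the first variable.\<close>

definition l2 :: "('i \<Rightarrow> complex) set" where
  "l2 = {f. (\<lambda>i. (cmod (f i))\<^sup>2) summable_on UNIV}"

definition l2_inner :: "('i \<Rightarrow> complex) \<Rightarrow> ('i \<Rightarrow> complex) \<Rightarrow> complex" where
  "l2_inner f g = (\<Sum>\<^sub>\<infinity>i. cnj (f i) * g i)"

definition l2_norm :: "('i \<Rightarrow> complex) \<Rightarrow> real" where
  "l2_norm f = sqrt (\<Sum>\<^sub>\<infinity>i. (cmod (f i))\<^sup>2)"

text \<open>Bounded (complex-linear) operators on l2 (only their action on l2 matters).\<close>
definition bdd_op :: "(('i \<Rightarrow> complex) \<Rightarrow> ('j \<Rightarrow> complex)) \<Rightarrow> bool" where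
  "bdd_op A \<longleftrightarrow>
     (\<forall>f\<in>l2. A f \<in> l2) \<and>
     (\<forall>f\<in>l2. \<forall>g\<in>l2. A (\<lambda>i. f i + g i) = (\<lambda>j. A f j + A g j)) \<and>
     (\<forall>f\<in>l2. \<forall>c. A (\<lambda>i. c * f i) = (\<lambda>j. c * A f j)) \<and>
     (\<exists>C. \<forall>f\<in>l2. l2_norm (A f) \<le> C * l2_norm f)"

definition unitary_op :: "(('i \<Rightarrow> complex) \<Rightarrow> ('i \<Rightarrow> complex)) \<Rightarrow> bool" where
  "unitary_op A \<longleftrightarrow> bdd_op A \<and> A ` l2 = l2 \<and>
     (\<forall>f\<in>l2. \<forall>g\<in>l2. l2_inner (A f) (A g) = l2_inner f g)"

definition adjoint_op :: "(('i \<Rightarrow> complex) \<Rightarrow> ('i \<Rightarrow> complex)) \<Rightarrow> (('i \<Rightarrow> complex) \<Rightarrow> ('i \<Rightarrow> complex))" where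
  "adjoint_op A = (SOME B. bdd_op B \<and> (\<forall>f\<in>l2. \<forall>g\<in>l2. l2_inner (B f) g = l2_inner f (A g)))"

definition tensor :: "('a \<Rightarrow> complex) \<Rightarrow> ('b \<Rightarrow> complex) \<Rightarrow> ('a \<times> 'b \<Rightarrow> complex)" where
  "tensor u \<xi> = (\<lambda>(a, b). u a * \<xi> b)"

definition partial_op ::
  "(('a \<times> 'b \<Rightarrow> complex) \<Rightarrow> ('a \<times> 'b \<Rightarrow> complex)) \<Rightarrow> ('a \<Rightarrow> complex) \<Rightarrow> ('a \<Rightarrow> complex)
     \<Rightarrow> (('b \<Rightarrow> complex) \<Rightarrow> ('b \<Rightarrow> complex))" where
  "partial_op A u v = (SOME B. bdd_op B \<and>
      (\<forall>\<xi>1\<in>l2. \<forall>\<xi>2\<in>l2. l2_inner \<xi>1 (B \<xi>2) = l2_inner (tensor u \<xi>1) (A (tensor v \<xi>2))))"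

type_synonym ('a, 'b) evol = "real \<Rightarrow> real \<Rightarrow> ('a \<times> 'b \<Rightarrow> complex) \<Rightarrow> ('a \<times> 'b \<Rightarrow> complex)"

text \<open>U^(e)_{s,t}: e = False is U_{s,t}, e = True is its adjoint (Z_2 = bool).\<close>
definition Ueps :: "('a, 'b) evol \<Rightarrow> bool \<Rightarrow> real \<Rightarrow> real \<Rightarrow> ('a \<times> 'b \<Rightarrow> complex) \<Rightarrow> ('a \<times> 'b \<Rightarrow> complex)" where
  "Ueps U e s t = (if e then adjoint_op (U s t) else U s t)"

definition fact_op :: "('a, 'b) evol \<Rightarrow> bool \<Rightarrow> real \<Rightarrow> real \<Rightarrow> ('a \<Rightarrow> complex) \<Rightarrow> ('a \<Rightarrow> complex)
     \<Rightarrow> ('b \<Rightarrow> complex) \<Rightarrow> ('b \<Rightarrow> complex)" where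
  "fact_op U e s t u v = partial_op (Ueps U e s t) u v"

definition fact_m1 :: "('a, 'b) evol \<Rightarrow> bool \<Rightarrow> real \<Rightarrow> real \<Rightarrow> ('a \<Rightarrow> complex) \<Rightarrow> ('a \<Rightarrow> complex)
     \<Rightarrow> ('b \<Rightarrow> complex) \<Rightarrow> ('b \<Rightarrow> complex)" where
  "fact_m1 U e s t u v = partial_op (\<lambda>f. (\<lambda>x. Ueps U e s t f x - f x)) u v"

text \<open>U^(eps)_{s,t}(u,v) for product vectors u = \<otimes> u_k, v = \<otimes> v_k in h^{\<otimes> n}:
  the ordered product of U^(eps_k)_{s_k,t_k}(u_k,v_k); a list entry is (eps_k, s_k, t_k, u_k, v_k).\<close>
definition prod_op :: "('a, 'b) evol \<Rightarrow> (bool \<times> real \<times> real \<times> ('a \<Rightarrow> complex) \<times> ('a \<Rightarrow> complex)) list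
     \<Rightarrow> ('b \<Rightarrow> complex) \<Rightarrow> ('b \<Rightarrow> complex)" where
  "prod_op U xs = foldr (\<lambda>(e, a, b, u, v) X. fact_op U e a b u v \<circ> X) xs id"

text \<open>(U^(eps)_{s,t} - 1)(p,w) for product vectors p,w in h^{\<otimes> n}, entries (eps_k, p_k, w_k);
  uses 1(p,w) = <p,w> 1 with <p,w> = prod_k <p_k,w_k>.\<close>
definition prod_m1 :: "('a, 'b) evol \<Rightarrow> real \<Rightarrow> real \<Rightarrow> (bool \<times> ('a \<Rightarrow> complex) \<times> ('a \<Rightarrow> complex)) list
     \<Rightarrow> ('b \<Rightarrow> complex) \<Rightarrow> ('b \<Rightarrow> complex)" where
  "prod_m1 U s t ys = (\<lambda>\<xi> j. prod_op U (map (\<lambda>(e, p, w). (e, s, t, p, w)) ys) \<xi> j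
        - (\<Prod>(e, p, w)\<leftarrow>ys. l2_inner p w) * \<xi> j)"

definition expect :: "('b \<Rightarrow> complex) \<Rightarrow> (('b \<Rightarrow> complex) \<Rightarrow> ('b \<Rightarrow> complex)) \<Rightarrow> complex" where
  "expect \<Omega> X = l2_inner \<Omega> (X \<Omega>)"

definition times_in :: "real \<Rightarrow> real \<Rightarrow> (bool \<times> real \<times> real \<times> 'x \<times> 'y) list \<Rightarrow> bool" where
  "times_in s t xs \<longleftrightarrow> sorted (s # concat (map (\<lambda>(e, a, b, u, v). [a, b]) xs) @ [t])"

definition vecs_ok :: "(bool \<times> real \<times> real \<times> ('a \<Rightarrow> complex) \<times> ('a \<Rightarrow> complex)) list \<Rightarrow> bool" where
  "vecs_ok xs \<longleftrightarrow> (\<forall>(e, a, b, u, v)\<in>set xs. u \<in> l2 \<and> v \<in> l2)"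

definition vecs_ok' :: "(bool \<times> ('a \<Rightarrow> complex) \<times> ('a \<Rightarrow> complex)) list \<Rightarrow> bool" where
  "vecs_ok' xs \<longleftrightarrow> (\<forall>(e, u, v)\<in>set xs. u \<in> l2 \<and> v \<in> l2)"

definition unitary_family :: "('a, 'b) evol \<Rightarrow> bool" where
  "unitary_family U \<longleftrightarrow> (\<forall>s t. 0 \<le> s \<longrightarrow> s \<le> t \<longrightarrow> unitary_op (U s t))"

definition A1 :: "('a, 'b) evol \<Rightarrow> bool" where
  "A1 U \<longleftrightarrow> (\<forall>r s t. 0 \<le> r \<longrightarrow> r \<le> s \<longrightarrow> s \<le> t \<longrightarrow> (\<forall>f\<in>l2. U r s (U s t f) = U r t f))"

definition A2i :: "('a, 'b) evol \<Rightarrow> bool" where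
  "A2i U \<longleftrightarrow> (\<forall>s1 t1 s2 t2 u1 v1 u2 v2.
      0 \<le> s1 \<longrightarrow> s1 \<le> t1 \<longrightarrow> 0 \<le> s2 \<longrightarrow> s2 \<le> t2 \<longrightarrow> {s1..<t1} \<inter> {s2..<t2} = {} \<longrightarrow>
      u1 \<in> l2 \<longrightarrow> v1 \<in> l2 \<longrightarrow> u2 \<in> l2 \<longrightarrow> v2 \<in> l2 \<longrightarrow>
      (\<forall>\<xi>\<in>l2. fact_op U False s1 t1 u1 v1 (fact_op U False s2 t2 u2 v2 \<xi>)
               = fact_op U False s2 t2 u2 v2 (fact_op U False s1 t1 u1 v1 \<xi>)) \<and>
      (\<forall>\<xi>\<in>l2. fact_op U False s1 t1 u1 v1 (adjoint_op (fact_op U False s2 t2 u2 v2) \<xi>)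
               = adjoint_op (fact_op U False s2 t2 u2 v2) (fact_op U False s1 t1 u1 v1 \<xi>)))"

definition A2ii :: "('a, 'b) evol \<Rightarrow> ('b \<Rightarrow> complex) \<Rightarrow> bool" where
  "A2ii U \<Omega> \<longleftrightarrow> (\<forall>s1 t1 s2 t2 xs ys.
      0 \<le> s1 \<longrightarrow> s1 \<le> t1 \<longrightarrow> 0 \<le> s2 \<longrightarrow> s2 \<le> t2 \<longrightarrow> {s1..<t1} \<inter> {s2..<t2} = {} \<longrightarrow>
      xs \<noteq> [] \<longrightarrow> ys \<noteq> [] \<longrightarrow> times_in s1 t1 xs \<longrightarrow> times_in s2 t2 ys \<longrightarrow>
      vecs_ok xs \<longrightarrow> vecs_ok ys \<longrightarrow>
      expect \<Omega> (prod_op U xs \<circ> prod_op U ys) = expect \<Omega> (prod_op U xs) * expect \<Omega> (prod_op U ys))"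

definition A3 :: "('a, 'b) evol \<Rightarrow> ('b \<Rightarrow> complex) \<Rightarrow> bool" where
  "A3 U \<Omega> \<longleftrightarrow> (\<forall>s t xs. 0 \<le> s \<longrightarrow> s \<le> t \<longrightarrow> xs \<noteq> [] \<longrightarrow> vecs_ok' xs \<longrightarrow>
      expect \<Omega> (prod_op U (map (\<lambda>(e, u, v). (e, s, t, u, v)) xs))
      = expect \<Omega> (prod_op U (map (\<lambda>(e, u, v). (e, 0, t - s, u, v)) xs)))"

definition B' :: "('a, 'b) evol \<Rightarrow> ('b \<Rightarrow> complex) \<Rightarrow> bool" where
  "B' U \<Omega> \<longleftrightarrow> (\<forall>u\<in>l2. \<forall>v\<in>l2. ((\<lambda>t. expect \<Omega> (fact_m1 U False 0 t u v)) \<longlongrightarrow> 0) (at_right 0))"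

definition C :: "('a, 'b) evol \<Rightarrow> ('b \<Rightarrow> complex) \<Rightarrow> bool" where
  "C U \<Omega> \<longleftrightarrow> (\<forall>e1 e2 e3 u1 v1 u2 v2 u3 v3.
      u1 \<in> l2 \<longrightarrow> v1 \<in> l2 \<longrightarrow> u2 \<in> l2 \<longrightarrow> v2 \<in> l2 \<longrightarrow> u3 \<in> l2 \<longrightarrow> v3 \<in> l2 \<longrightarrow>
      ((\<lambda>t. expect \<Omega> (fact_m1 U e1 0 t u1 v1 \<circ> fact_m1 U e2 0 t u2 v2 \<circ> fact_m1 U e3 0 t u3 v3)
            / complex_of_real t) \<longlongrightarrow> 0) (at_right 0))"

text \<open>T_t on h: <u, T_t v> = <Omega, U_t(u,v) Omega>; D(G) is the domain of its generator.\<close>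
definition Tsg :: "('a, 'b) evol \<Rightarrow> ('b \<Rightarrow> complex) \<Rightarrow> real \<Rightarrow> ('a \<Rightarrow> complex) \<Rightarrow> ('a \<Rightarrow> complex)" where
  "Tsg U \<Omega> t = (SOME B. bdd_op B \<and>
      (\<forall>u\<in>l2. \<forall>v\<in>l2. l2_inner u (B v) = expect \<Omega> (fact_op U False 0 t u v)))"

definition domG :: "('a, 'b) evol \<Rightarrow> ('b \<Rightarrow> complex) \<Rightarrow> ('a \<Rightarrow> complex) set" where
  "domG U \<Omega> = {v \<in> l2. \<exists>g\<in>l2.
      ((\<lambda>t. l2_norm (\<lambda>i. (Tsg U \<Omega> t v i - v i) / complex_of_real t - g i)) \<longlongrightarrow> 0) (at_right 0)}"

end

theory Submission
  imports Defs
begin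

(*
  For a unitary V one has |(V - 1) x|^2 = -2 Re <x, (V - 1) x>, so an increment
  X = (U^(e)_t - 1)(u, v) satisfies |X xi|^2 <= 2 |u|^2 |<xi, (U^(e)_t - 1)(v, v) xi>|.

  (i) In a moment <Omega, X_1 X_2 ... X_(n-1) X_n Omega> with n >= 4, move X_1 X_2 to the left by
  taking adjoints and apply Cauchy-Schwarz; the bound above controls |X_2^* X_1^* Omega|^2 and
  |X_(n-1) X_n Omega|^2 by two moments of length three, so the square of the n-th moment is
  dominated by the product of two o(t) quantities given by (C).

  (ii) The sum of the terms with e = 1 and e = 0 equals -<(U_t - 1)(v (x) Omega), (U_t - 1)(u (x) Y)>
  with Y = (U^(e')_t - 1)(p, w) Omega.  The first vector has squared norm O(t) because v is in the
  domain of the generator; expanding Y into words of increments, the squared norm of the second is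
  a combination of moments of length at least three, hence o(t) by (i).  So the two difference
  quotients differ by o(1).  Only unitarity, (C) and v in D(G) enter.
*)

lemma mult_le_weighted_squares: fixes x y s :: real assumes "s > 0"
  shows "x * y \<le> (s * x\<^sup>2 + y\<^sup>2 / s) / 2"
proof -
  have "0 \<le> (s * x - y)\<^sup>2" by simp
  then have "2 * s * (x * y) \<le> s * (s * x\<^sup>2) + y\<^sup>2" by (simp add: power2_eq_square algebra_simps)
  then show ?thesis using assms by (simp add: field_simps power2_eq_square)
qed

lemma minus_Re_le_cmod: "- 2 * Re z \<le> 2 * cmod z"
  using abs_Re_le_cmod[of z] by linarith

lemma sum_list_div: "(\<Sum>x\<leftarrow>L. f x) / (c::'a::field) = (\<Sum>x\<leftarrow>L. f x / c)"
  by (induction L) (auto simp: add_divide_distrib)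

lemma tendsto_sum_list_zero:
  fixes f :: "'x \<Rightarrow> 'y \<Rightarrow> 'v::real_normed_vector"
  shows "(\<And>x. x \<in> set L \<Longrightarrow> (f x \<longlongrightarrow> 0) F) \<Longrightarrow> ((\<lambda>t. \<Sum>x\<leftarrow>L. f x t) \<longlongrightarrow> 0) F"
proof (induction L)
  case Nil then show ?case by simp
next
  case (Cons a L) then show ?case using tendsto_add[of "f a" 0 F "\<lambda>t. \<Sum>x\<leftarrow>L. f x t" 0] by simp
qed

lemma obtain_last2:
  assumes "2 \<le> length ys"
  obtains mid a b where "ys = mid @ [a, b]"
proof -
  obtain zs b where zs: "ys = zs @ [b]" using assms by (cases ys rule: rev_exhaust) auto
  then obtain mid a where "zs = mid @ [a]" using assms by (cases zs rule: rev_exhaust) auto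
  with zs that show ?thesis by simp
qed

lemma tendsto_zero_if_sq_bounded:
  fixes f :: "'x \<Rightarrow> 'v::real_normed_vector"
  assumes "\<forall>\<^sub>F t in F. (norm (f t))\<^sup>2 \<le> g t" and "(g \<longlongrightarrow> 0) F"
  shows "(f \<longlongrightarrow> 0) F"
proof -
  have "\<forall>\<^sub>F t in F. norm ((norm (f t))\<^sup>2) \<le> g t" using assms(1) by simp
  from Lim_null_comparison[OF this assms(2)]
  have "((\<lambda>t. (norm (f t))\<^sup>2) \<longlongrightarrow> 0) F" .
  then have "((\<lambda>t. sqrt ((norm (f t))\<^sup>2)) \<longlongrightarrow> sqrt 0) F" by (rule tendsto_real_sqrt)
  then have "((\<lambda>t. norm (f t)) \<longlongrightarrow> 0) F" by simp
  then show ?thesis by (rule tendsto_norm_zero_cancel)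
qed

lemma tendsto_minus_iff_if_sum_tendsto_zero:
  fixes f g :: "'x \<Rightarrow> 'v::real_normed_vector"
  assumes "((\<lambda>t. f t + g t) \<longlongrightarrow> 0) F"
  shows "(f \<longlongrightarrow> - L) F \<longleftrightarrow> (g \<longlongrightarrow> L) F"
proof
  assume "(f \<longlongrightarrow> - L) F"
  from tendsto_diff[OF assms this] show "(g \<longlongrightarrow> L) F" by simp
next
  assume "(g \<longlongrightarrow> L) F"
  from tendsto_diff[OF assms this] show "(f \<longlongrightarrow> - L) F" by simp
qed

lemma abs_summable_product:
  fixes x :: "'a \<Rightarrow> 'c::{real_normed_field, banach}" and y :: "'b \<Rightarrow> 'c"
  assumes x: "(\<lambda>a. norm (x a)) summable_on UNIV" and y: "(\<lambda>b. norm (y b)) summable_on UNIV"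
  shows "(\<lambda>p. norm (x (fst p) * y (snd p))) summable_on UNIV"
    and "(\<lambda>p. x (fst p) * y (snd p)) summable_on UNIV"
    and "infsum (\<lambda>p. x (fst p) * y (snd p)) UNIV = infsum x UNIV * infsum y UNIV"
proof -
  have S: "(UNIV :: ('a \<times> 'b) set) = Sigma UNIV (\<lambda>_. UNIV)" by simp
  have "(\<lambda>p. norm (x (fst p) * y (snd p))) summable_on Sigma UNIV (\<lambda>_. UNIV)"
  proof (rule Infinite_Sum.abs_summable_on_Sigma_iff[THEN iffD2], intro conjI ballI)
    fix a :: 'a
    show "(\<lambda>b. norm (x (fst (a, b)) * y (snd (a, b)))) summable_on UNIV"
      using summable_on_cmult_right[OF y, of "norm (x a)"] by (simp add: norm_mult)
  next
    have "\<And>a. infsum (\<lambda>b. norm (x (fst (a, b)) * y (snd (a, b)))) UNIV = norm (x a) * infsum (\<lambda>b. norm (y b)) UNIV"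
      by (simp add: norm_mult infsum_cmult_right')
    then show "(\<lambda>a. norm (infsum (\<lambda>b. norm (x (fst (a, b)) * y (snd (a, b)))) UNIV)) summable_on UNIV"
      using summable_on_cmult_left[OF x, of "norm (infsum (\<lambda>b. norm (y b)) UNIV)"]
      by (simp add: norm_mult abs_mult)
  qed
  then show 1: "(\<lambda>p. norm (x (fst p) * y (snd p))) summable_on UNIV" by simp
  then show 2: "(\<lambda>p. x (fst p) * y (snd p)) summable_on UNIV" by (rule abs_summable_summable)
  have "infsum (\<lambda>a. infsum (\<lambda>b. x (fst (a,b)) * y (snd (a,b))) UNIV) UNIV = infsum (\<lambda>p. x (fst p) * y (snd p)) (Sigma UNIV (\<lambda>_. UNIV))"
    by (rule infsum_Sigma_banach) (use 2 in simp)
  then show "infsum (\<lambda>p. x (fst p) * y (snd p)) UNIV = infsum x UNIV * infsum y UNIV"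
    by (simp add: infsum_cmult_right' infsum_cmult_left')
qed

section \<open>The sequence space l2\<close>

lemma l2_iff_summable: "f \<in> l2 \<longleftrightarrow> (\<lambda>i. (cmod (f i))\<^sup>2) summable_on UNIV"
  by (simp add: l2_def)

lemma summable_on_half:
  fixes h :: "'i \<Rightarrow> real"
  assumes "h summable_on UNIV"
  shows "(\<lambda>i. h i / 2) summable_on UNIV"
  using summable_on_cmult_left[OF assms, of "1/2"] by simp

lemma l2_prod_abs:
  assumes "f \<in> l2" "g \<in> l2"
  shows "(\<lambda>i. norm (cnj (f i) * g i)) summable_on UNIV"
proof -
  have s0: "(\<lambda>i. (cmod (f i))\<^sup>2 + (cmod (g i))\<^sup>2) summable_on UNIV"
    using assms unfolding l2_iff_summable by (rule summable_on_add)
  have s: "(\<lambda>i. ((cmod (f i))\<^sup>2 + (cmod (g i))\<^sup>2) / 2) summable_on UNIV"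
    by (rule summable_on_half[OF s0])
  show ?thesis
  proof (rule Infinite_Sum.abs_summable_on_comparison_test'[OF s])
    fix i
    have "cmod (f i) * cmod (g i) \<le> ((cmod (f i))\<^sup>2 + (cmod (g i))\<^sup>2) / 2"
      using sum_squares_bound[of "cmod (f i)" "cmod (g i)"] by (simp add: power2_eq_square)
    then show "norm (cnj (f i) * g i) \<le> ((cmod (f i))\<^sup>2 + (cmod (g i))\<^sup>2) / 2"
      by (simp add: norm_mult)
  qed
qed

lemma l2_prod_summable:
  assumes "f \<in> l2" "g \<in> l2"
  shows "(\<lambda>i. cnj (f i) * g i) summable_on UNIV"
  using abs_summable_summable[OF l2_prod_abs[OF assms]] .

lemma l2_add: assumes "f \<in> l2" "g \<in> l2" shows "(\<lambda>i. f i + g i) \<in> l2"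
proof -
  have s0: "(\<lambda>i. 2 * (cmod (f i))\<^sup>2 + 2 * (cmod (g i))\<^sup>2) summable_on UNIV"
    using assms unfolding l2_iff_summable by (intro summable_on_add summable_on_cmult_right)
  show ?thesis unfolding l2_iff_summable
  proof (rule summable_on_comparison_test[OF s0])
    fix i
    have "cmod (f i + g i) \<le> cmod (f i) + cmod (g i)" by (rule norm_triangle_ineq)
    then have "(cmod (f i + g i))\<^sup>2 \<le> (cmod (f i) + cmod (g i))\<^sup>2"
      by (simp add: power_mono)
    also have "\<dots> \<le> 2 * (cmod (f i))\<^sup>2 + 2 * (cmod (g i))\<^sup>2"
      using sum_squares_bound[of "cmod (f i)" "cmod (g i)"] by (simp add: power2_eq_square algebra_simps)
    finally show "(cmod (f i + g i))\<^sup>2 \<le> 2 * (cmod (f i))\<^sup>2 + 2 * (cmod (g i))\<^sup>2" .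
  qed simp
qed

lemma l2_scale: assumes "f \<in> l2" shows "(\<lambda>i. c * f i) \<in> l2"
  using summable_on_cmult_right[OF assms[unfolded l2_iff_summable], of "(cmod c)\<^sup>2"]
  unfolding l2_iff_summable by (simp add: norm_mult power_mult_distrib)

lemma l2_zero: "(\<lambda>i. 0) \<in> l2"
  unfolding l2_iff_summable by simp

lemma l2_uminus: assumes "f \<in> l2" shows "(\<lambda>i. - f i) \<in> l2"
  using l2_scale[OF assms, of "-1"] by simp

lemma l2_diff: assumes "f \<in> l2" "g \<in> l2" shows "(\<lambda>i. f i - g i) \<in> l2"
  using l2_add[OF assms(1) l2_uminus[OF assms(2)]] by simp

lemma l2_delta: "(\<lambda>i. if i = j then 1 else 0) \<in> l2"
proof -
  have "(\<lambda>i. (cmod (if i = j then 1 else 0::complex))\<^sup>2) summable_on {j}" by simp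
  then show ?thesis unfolding l2_iff_summable
    by (rule summable_on_cong_neutral[THEN iffD1, rotated -1]) auto
qed

lemma inner_delta: "l2_inner (\<lambda>i. if i = j then 1 else 0) f = f j"
proof -
  have "l2_inner (\<lambda>i. if i = j then 1 else 0) f = infsum (\<lambda>i. cnj (if i = j then 1 else 0) * f i) {j}"
    unfolding l2_inner_def by (rule infsum_cong_neutral) auto
  then show ?thesis by simp
qed

lemma inner_add_right: assumes "f \<in> l2" "g \<in> l2" "h \<in> l2"
  shows "l2_inner f (\<lambda>i. g i + h i) = l2_inner f g + l2_inner f h"
  unfolding l2_inner_def using l2_prod_summable[OF assms(1,2)] l2_prod_summable[OF assms(1,3)]
  by (simp add: distrib_left infsum_add)

lemma inner_add_left: assumes "f \<in> l2" "g \<in> l2" "h \<in> l2"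
  shows "l2_inner (\<lambda>i. f i + g i) h = l2_inner f h + l2_inner g h"
  unfolding l2_inner_def using l2_prod_summable[OF assms(1,3)] l2_prod_summable[OF assms(2,3)]
  by (simp add: distrib_right infsum_add)

lemma inner_scale_right: "l2_inner f (\<lambda>i. c * g i) = c * l2_inner f g"
  unfolding l2_inner_def
  by (simp add: mult.left_commute infsum_cmult_right')

lemma inner_scale_left: "l2_inner (\<lambda>i. c * f i) g = cnj c * l2_inner f g"
  unfolding l2_inner_def
  by (simp add: mult.assoc infsum_cmult_right')

lemma inner_cnj: "l2_inner g f = cnj (l2_inner f g)"
  unfolding l2_inner_def by (simp flip: infsum_cnj add: mult.commute)

lemma inner_diff_right: assumes "f \<in> l2" "g \<in> l2" "h \<in> l2"
  shows "l2_inner f (\<lambda>i. g i - h i) = l2_inner f g - l2_inner f h"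
  using inner_add_right[OF assms(1,2) l2_uminus[OF assms(3)]] inner_scale_right[of f "-1" h]
  by simp

lemma inner_diff_left: assumes "f \<in> l2" "g \<in> l2" "h \<in> l2"
  shows "l2_inner (\<lambda>i. f i - g i) h = l2_inner f h - l2_inner g h"
  using inner_add_left[OF assms(1) l2_uminus[OF assms(2)] assms(3)] inner_scale_left[of "-1" g h]
  by simp

lemma inner_zero_right: "l2_inner f (\<lambda>i. 0) = 0"
  unfolding l2_inner_def by simp

lemma inner_zero_left: "l2_inner (\<lambda>i. 0) f = 0"
  unfolding l2_inner_def by simp

lemma l2_norm_sq: "(l2_norm f)\<^sup>2 = (\<Sum>\<^sub>\<infinity>i. (cmod (f i))\<^sup>2)"
  unfolding l2_norm_def using infsum_nonneg[where M=UNIV and f="\<lambda>i. (cmod (f i))\<^sup>2"] by simp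

lemma l2_norm_nonneg: "0 \<le> l2_norm f"
  unfolding l2_norm_def using infsum_nonneg[where M=UNIV and f="\<lambda>i. (cmod (f i))\<^sup>2"] by simp

lemma inner_self: assumes "f \<in> l2"
  shows "l2_inner f f = complex_of_real ((l2_norm f)\<^sup>2)"
proof -
  have "((\<lambda>i. complex_of_real ((cmod (f i))\<^sup>2)) has_sum complex_of_real (\<Sum>\<^sub>\<infinity>i. (cmod (f i))\<^sup>2)) UNIV"
    using assms unfolding l2_iff_summable by (intro has_sum_of_real) simp
  moreover have "\<And>i. cnj (f i) * f i = complex_of_real ((cmod (f i))\<^sup>2)"
    by (metis complex_norm_square mult.commute of_real_power)
  ultimately show ?thesis unfolding l2_inner_def l2_norm_sq
    by (simp add: infsumI)
qed

lemma inner_self_Re: assumes "f \<in> l2" shows "Re (l2_inner f f) = (l2_norm f)\<^sup>2"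
  using inner_self[OF assms] by simp

lemma l2_norm_zero: assumes "f \<in> l2" "l2_norm f = 0" shows "f i = 0"
proof -
  have "(\<Sum>\<^sub>\<infinity>i. (cmod (f i))\<^sup>2) = 0" using assms(2) l2_norm_sq[of f] by simp
  then have "(cmod (f i))\<^sup>2 = 0"
    using nonneg_infsum_le_0D[of "\<lambda>i. (cmod (f i))\<^sup>2" UNIV i] assms(1) unfolding l2_iff_summable by simp
  then show ?thesis by simp
qed

lemma cmod_inner_le_weighted:
  assumes f: "f \<in> l2" and g: "g \<in> l2" and s: "s > 0"
  shows "cmod (l2_inner f g) \<le> (s * (l2_norm f)\<^sup>2 + (l2_norm g)\<^sup>2 / s) / 2"
proof -
  have sf: "(\<lambda>i. s * (cmod (f i))\<^sup>2) summable_on UNIV"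
    using summable_on_cmult_right[OF f[unfolded l2_iff_summable]] .
  have sg: "(\<lambda>i. (cmod (g i))\<^sup>2 / s) summable_on UNIV"
    using summable_on_cmult_left[OF g[unfolded l2_iff_summable], of "1/s"] by simp
  have "cmod (l2_inner f g) \<le> (\<Sum>\<^sub>\<infinity>i. norm (cnj (f i) * g i))"
    unfolding l2_inner_def by (rule norm_infsum_bound) (rule l2_prod_abs[OF f g])
  also have "\<dots> \<le> (\<Sum>\<^sub>\<infinity>i. (s * (cmod (f i))\<^sup>2 + (cmod (g i))\<^sup>2 / s) / 2)"
    using mult_le_weighted_squares[OF s]
    by (intro infsum_mono l2_prod_abs[OF f g] summable_on_half summable_on_add sf sg) (simp add: norm_mult)
  also have "\<dots> = (\<Sum>\<^sub>\<infinity>i. s * (cmod (f i))\<^sup>2 + (cmod (g i))\<^sup>2 / s) / 2"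
    by (simp add: infsum_cmult_left'[where c="1/2", simplified])
  also have "\<dots> = ((\<Sum>\<^sub>\<infinity>i. s * (cmod (f i))\<^sup>2) + (\<Sum>\<^sub>\<infinity>i. (cmod (g i))\<^sup>2 / s)) / 2"
    by (simp add: infsum_add[OF sf sg])
  also have "\<dots> = (s * (l2_norm f)\<^sup>2 + (l2_norm g)\<^sup>2 / s) / 2"
    by (simp add: l2_norm_sq infsum_cmult_right' infsum_cmult_left'[where c="1/s", simplified])
  finally show ?thesis .
qed

lemma cauchy_schwarz:
  assumes f: "f \<in> l2" and g: "g \<in> l2"
  shows "cmod (l2_inner f g) \<le> l2_norm f * l2_norm g"
proof (cases "l2_norm f = 0 \<or> l2_norm g = 0")
  case True
  then have "f = (\<lambda>i. 0) \<or> g = (\<lambda>i. 0)" using l2_norm_zero[OF f] l2_norm_zero[OF g] by auto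
  then show ?thesis by (auto simp: inner_zero_left inner_zero_right l2_norm_nonneg)
next
  case False
  then have A: "l2_norm f > 0" and B: "l2_norm g > 0"
    using l2_norm_nonneg[of f] l2_norm_nonneg[of g] by auto
  have "cmod (l2_inner f g)
      \<le> (l2_norm g / l2_norm f * (l2_norm f)\<^sup>2 + (l2_norm g)\<^sup>2 / (l2_norm g / l2_norm f)) / 2"
    using A B by (intro cmod_inner_le_weighted f g) simp
  also have "\<dots> = l2_norm f * l2_norm g" using A B by (simp add: field_simps power2_eq_square)
  finally show ?thesis .
qed

lemma l2_norm_sq_inner: assumes "f \<in> l2" shows "(l2_norm f)\<^sup>2 = Re (l2_inner f f)"
  using inner_self_Re[OF assms] by simp

lemma l2_norm_scale: assumes "f \<in> l2" shows "l2_norm (\<lambda>i. c * f i) = cmod c * l2_norm f"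
proof -
  have "l2_inner (\<lambda>i. c * f i) (\<lambda>i. c * f i) = (cnj c * c) * l2_inner f f"
    by (simp add: inner_scale_left inner_scale_right)
  also have "\<dots> = complex_of_real ((cmod c * l2_norm f)\<^sup>2)"
    unfolding inner_self[OF assms] by (simp add: power_mult_distrib mult.commute flip: of_real_power complex_norm_square)
  finally have "(l2_norm (\<lambda>i. c * f i))\<^sup>2 = (cmod c * l2_norm f)\<^sup>2"
    using inner_self[OF l2_scale[OF assms, of c]] of_real_eq_iff by metis
  then show ?thesis
    by (meson l2_norm_nonneg mult_nonneg_nonneg norm_ge_zero power2_eq_iff_nonneg)
qed

lemma l2_norm_add_sq: assumes "f \<in> l2" "g \<in> l2"
  shows "(l2_norm (\<lambda>i. f i + g i))\<^sup>2 = (l2_norm f)\<^sup>2 + 2 * Re (l2_inner f g) + (l2_norm g)\<^sup>2"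
proof -
  have "(l2_norm (\<lambda>i. f i + g i))\<^sup>2 = Re (l2_inner (\<lambda>i. f i + g i) (\<lambda>i. f i + g i))"
    by (rule l2_norm_sq_inner[OF l2_add[OF assms]])
  also have "\<dots> = Re (l2_inner f f + l2_inner f g + (l2_inner g f + l2_inner g g))"
    by (simp add: inner_add_left inner_add_right assms l2_add)
  also have "\<dots> = (l2_norm f)\<^sup>2 + 2 * Re (l2_inner f g) + (l2_norm g)\<^sup>2"
    using inner_cnj[of g f] l2_norm_sq_inner[OF assms(1)] l2_norm_sq_inner[OF assms(2)] by simp
  finally show ?thesis .
qed

lemma l2_norm_triangle: assumes "f \<in> l2" "g \<in> l2"
  shows "l2_norm (\<lambda>i. f i + g i) \<le> l2_norm f + l2_norm g"
proof -
  have "Re (l2_inner f g) \<le> l2_norm f * l2_norm g"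
    using cauchy_schwarz[OF assms] complex_Re_le_cmod order_trans by blast
  then have "(l2_norm (\<lambda>i. f i + g i))\<^sup>2 \<le> (l2_norm f + l2_norm g)\<^sup>2"
    unfolding l2_norm_add_sq[OF assms] by (simp add: power2_sum)
  then show ?thesis using l2_norm_nonneg power2_le_imp_le
    by (metis add_nonneg_nonneg)
qed

lemma l2_norm_diff_triangle: assumes "f \<in> l2" "g \<in> l2"
  shows "l2_norm (\<lambda>i. f i - g i) \<le> l2_norm f + l2_norm g"
  using l2_norm_triangle[OF assms(1) l2_uminus[OF assms(2)]] l2_norm_scale[OF assms(2), of "-1"] by simp

lemma l2_norm_diff_sq: assumes "f \<in> l2" "g \<in> l2"
  shows "(l2_norm (\<lambda>i. f i - g i))\<^sup>2 = (l2_norm f)\<^sup>2 - 2 * Re (l2_inner f g) + (l2_norm g)\<^sup>2"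
  using l2_norm_add_sq[OF assms(1) l2_uminus[OF assms(2)]] l2_norm_scale[OF assms(2), of "-1"]
    inner_scale_right[of f "-1" g] by simp

lemma l2_sum_list: "(\<And>x. x \<in> set L \<Longrightarrow> F x \<in> l2) \<Longrightarrow> (\<lambda>j. \<Sum>x\<leftarrow>L. F x j) \<in> l2"
proof (induction L)
  case Nil then show ?case using l2_zero by simp
next
  case (Cons a L) then show ?case using l2_add[of "F a" "\<lambda>j. \<Sum>x\<leftarrow>L. F x j"] by simp
qed

lemma inner_sum_list_left: "(\<And>x. x \<in> set L \<Longrightarrow> F x \<in> l2) \<Longrightarrow> g \<in> l2 \<Longrightarrow>
    l2_inner (\<lambda>j. \<Sum>x\<leftarrow>L. F x j) g = (\<Sum>x\<leftarrow>L. l2_inner (F x) g)"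
proof (induction L)
  case Nil then show ?case using inner_zero_left by simp
next
  case (Cons a L)
  then show ?case using inner_add_left[of "F a" "\<lambda>j. \<Sum>x\<leftarrow>L. F x j" g] l2_sum_list[of L F] by simp
qed

lemma inner_sum_list_right: "(\<And>x. x \<in> set L \<Longrightarrow> F x \<in> l2) \<Longrightarrow> g \<in> l2 \<Longrightarrow>
    l2_inner g (\<lambda>j. \<Sum>x\<leftarrow>L. F x j) = (\<Sum>x\<leftarrow>L. l2_inner g (F x))"
proof (induction L)
  case Nil then show ?case using inner_zero_right by simp
next
  case (Cons a L)
  then show ?case using inner_add_right[of g "F a" "\<lambda>j. \<Sum>x\<leftarrow>L. F x j"] l2_sum_list[of L F] by simp
qed

section \<open>Tensor products and partial inner products\<close>

lemma tensor_app: "tensor u \<xi> (a, b) = u a * \<xi> b"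
  by (simp add: tensor_def)

lemma tensor_l2: assumes "u \<in> l2" "\<xi> \<in> l2" shows "tensor u \<xi> \<in> l2"
proof -
  have "(\<lambda>p. (cmod (u (fst p)))\<^sup>2 * (cmod (\<xi> (snd p)))\<^sup>2) summable_on UNIV"
    using abs_summable_product(2)[of "\<lambda>a. (cmod (u a))\<^sup>2" "\<lambda>b. (cmod (\<xi> b))\<^sup>2"] assms
    by (simp add: l2_iff_summable)
  moreover have "\<And>p. (cmod (tensor u \<xi> p))\<^sup>2 = (cmod (u (fst p)))\<^sup>2 * (cmod (\<xi> (snd p)))\<^sup>2"
    by (auto simp: tensor_def norm_mult power_mult_distrib split: prod.split)
  ultimately show ?thesis by (simp add: l2_iff_summable)
qed

lemma tensor_inner: assumes "u \<in> l2" "\<xi> \<in> l2" "v \<in> l2" "\<eta> \<in> l2"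
  shows "l2_inner (tensor u \<xi>) (tensor v \<eta>) = l2_inner u v * l2_inner \<xi> \<eta>"
proof -
  have e: "\<And>p. cnj (tensor u \<xi> p) * tensor v \<eta> p = (cnj (u (fst p)) * v (fst p)) * (cnj (\<xi> (snd p)) * \<eta> (snd p))"
    by (auto simp: tensor_def split: prod.split)
  show ?thesis unfolding l2_inner_def e
    by (rule abs_summable_product(3)) (use l2_prod_abs assms in auto)
qed

lemma tensor_norm: assumes "u \<in> l2" "\<xi> \<in> l2"
  shows "l2_norm (tensor u \<xi>) = l2_norm u * l2_norm \<xi>"
proof -
  have "(l2_norm (tensor u \<xi>))\<^sup>2 = (l2_norm u * l2_norm \<xi>)\<^sup>2"
  proof -
    have "complex_of_real ((l2_norm (tensor u \<xi>))\<^sup>2) = complex_of_real ((l2_norm u * l2_norm \<xi>)\<^sup>2)"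
      using inner_self[OF tensor_l2[OF assms]] tensor_inner[OF assms assms] inner_self[OF assms(1)] inner_self[OF assms(2)]
      by (simp add: power_mult_distrib)
    then show ?thesis using of_real_eq_iff by blast
  qed
  then show ?thesis
    by (meson l2_norm_nonneg mult_nonneg_nonneg power2_eq_iff_nonneg)
qed

lemma tensor_add_right: "tensor v (\<lambda>i. f i + g i) = (\<lambda>p. tensor v f p + tensor v g p)"
  by (auto simp: tensor_def distrib_left)

lemma tensor_scale_right: "tensor v (\<lambda>i. c * f i) = (\<lambda>p. c * tensor v f p)"
  by (auto simp: tensor_def)

lemma tensor_add_left: "tensor (\<lambda>i. f i + g i) \<omega> = (\<lambda>p. tensor f \<omega> p + tensor g \<omega> p)"
  by (auto simp: tensor_def distrib_right)

lemma tensor_scale_left: "tensor (\<lambda>i. c * f i) \<omega> = (\<lambda>p. c * tensor f \<omega> p)"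
  by (auto simp: tensor_def)

lemma swap_summable: "(\<lambda>(x,y). h (y,x)) summable_on UNIV \<longleftrightarrow> h summable_on UNIV"
  using summable_on_swap[of h UNIV UNIV] by simp

lemma swap_infsum:
  fixes h :: "'a \<times> 'b \<Rightarrow> 'c::{comm_monoid_add,t2_space}"
  shows "infsum (\<lambda>(x,y). h (y,x)) UNIV = infsum h UNIV"
proof (cases "h summable_on UNIV")
  case True
  then have "(h has_sum infsum h UNIV) (UNIV \<times> UNIV)" by simp
  then have "((\<lambda>(x,y). h (y,x)) has_sum infsum h UNIV) (UNIV \<times> UNIV)" using has_sum_swap by blast
  then show ?thesis by (simp add: infsumI)
next
  case False
  then have "\<not> (\<lambda>(x,y). h (y,x)) summable_on UNIV" using swap_summable by blast
  with False show ?thesis by (simp add: infsum_not_exists)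
qed

lemma swap_l2: assumes "F \<in> l2" shows "(\<lambda>(x,y). F (y,x)) \<in> l2"
proof -
  have "(\<lambda>p. (cmod (F p))\<^sup>2) summable_on UNIV" using assms by (simp add: l2_iff_summable)
  then have "(\<lambda>(x,y). (cmod (F (y,x)))\<^sup>2) summable_on UNIV"
    using swap_summable[of "\<lambda>p. (cmod (F p))\<^sup>2"] by simp
  then show ?thesis unfolding l2_iff_summable by (simp add: case_prod_unfold)
qed

lemma swap_inner: "l2_inner (\<lambda>(x,y). F (y,x)) (\<lambda>(x,y). G (y,x)) = l2_inner F G"
  unfolding l2_inner_def using swap_infsum[of "\<lambda>p. cnj (F p) * G p"]
  by (simp add: case_prod_unfold)

lemma swap_norm: assumes "F \<in> l2" shows "l2_norm (\<lambda>(x,y). F (y,x)) = l2_norm F"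
proof -
  have "(l2_norm (\<lambda>(x,y). F (y,x)))\<^sup>2 = (l2_norm F)\<^sup>2"
    using l2_norm_sq_inner[OF swap_l2[OF assms]] l2_norm_sq_inner[OF assms] swap_inner[of F F] by simp
  then show ?thesis using l2_norm_nonneg[of "\<lambda>(x,y). F (y,x)"] l2_norm_nonneg[of F] by (simp add: power2_eq_iff_nonneg)
qed

lemma summable_swapped_sq_norms: assumes "F \<in> l2"
  shows "(\<lambda>(b,a). (cmod (F (a,b)))\<^sup>2) summable_on UNIV \<times> UNIV"
proof -
  have "(\<lambda>p. (cmod (F p))\<^sup>2) summable_on UNIV" using assms by (simp add: l2_iff_summable)
  then show ?thesis using swap_summable[of "\<lambda>p. (cmod (F p))\<^sup>2"] by simp
qed

lemma l2_column: assumes "F \<in> l2" shows "(\<lambda>a. F (a,b)) \<in> l2"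
proof -
  have "(\<lambda>(x,y). (\<lambda>b a. (cmod (F (a,b)))\<^sup>2) x y) summable_on Sigma UNIV (\<lambda>_. UNIV)"
    using summable_swapped_sq_norms[OF assms] by simp
  from summable_on_SigmaD1[OF this, of b] show ?thesis by (simp add: l2_iff_summable)
qed

lemma column_sq_norms: assumes "F \<in> l2"
  shows "(\<lambda>b. \<Sum>\<^sub>\<infinity>a. (cmod (F (a,b)))\<^sup>2) summable_on UNIV"
    and "(\<Sum>\<^sub>\<infinity>b. \<Sum>\<^sub>\<infinity>a. (cmod (F (a,b)))\<^sup>2) = (l2_norm F)\<^sup>2"
proof -
  have S: "(\<lambda>(x,y). (\<lambda>b a. (cmod (F (a,b)))\<^sup>2) x y) summable_on Sigma UNIV (\<lambda>_. UNIV)"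
    using summable_swapped_sq_norms[OF assms] by simp
  show "(\<lambda>b. \<Sum>\<^sub>\<infinity>a. (cmod (F (a,b)))\<^sup>2) summable_on UNIV"
    using summable_on_Sigma_banach[OF S] by simp
  have "(\<Sum>\<^sub>\<infinity>b. \<Sum>\<^sub>\<infinity>a. (cmod (F (a,b)))\<^sup>2) = infsum (\<lambda>(b,a). (cmod (F (a,b)))\<^sup>2) UNIV"
    using infsum_Sigma'_banach[OF S] by simp
  also have "\<dots> = infsum (\<lambda>p. (cmod (F p))\<^sup>2) UNIV"
    using swap_infsum[of "\<lambda>p. (cmod (F p))\<^sup>2"] by simp
  finally show "(\<Sum>\<^sub>\<infinity>b. \<Sum>\<^sub>\<infinity>a. (cmod (F (a,b)))\<^sup>2) = (l2_norm F)\<^sup>2"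
    by (simp add: l2_norm_sq)
qed

definition partial_inner :: "('a \<Rightarrow> complex) \<Rightarrow> ('a \<times> 'b \<Rightarrow> complex) \<Rightarrow> ('b \<Rightarrow> complex)" where
  "partial_inner \<xi> F = (\<lambda>b. l2_inner \<xi> (\<lambda>a. F (a,b)))"

lemma partial_inner_sq_le: assumes "\<xi> \<in> l2" "F \<in> l2"
  shows "(cmod (partial_inner \<xi> F b))\<^sup>2 \<le> (l2_norm \<xi>)\<^sup>2 * (\<Sum>\<^sub>\<infinity>a. (cmod (F (a,b)))\<^sup>2)"
proof -
  have "cmod (partial_inner \<xi> F b) \<le> l2_norm \<xi> * l2_norm (\<lambda>a. F (a,b))"
    unfolding partial_inner_def by (rule cauchy_schwarz[OF assms(1) l2_column[OF assms(2)]])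
  then have "(cmod (partial_inner \<xi> F b))\<^sup>2 \<le> (l2_norm \<xi> * l2_norm (\<lambda>a. F (a,b)))\<^sup>2"
    by (simp add: power_mono)
  then show ?thesis by (simp add: power_mult_distrib l2_norm_sq)
qed

lemma partial_inner_l2: assumes "\<xi> \<in> l2" "F \<in> l2" shows "partial_inner \<xi> F \<in> l2"
  unfolding l2_iff_summable
proof (rule summable_on_comparison_test)
  show "(\<lambda>b. (l2_norm \<xi>)\<^sup>2 * (\<Sum>\<^sub>\<infinity>a. (cmod (F (a,b)))\<^sup>2)) summable_on UNIV"
    by (rule summable_on_cmult_right[OF column_sq_norms(1)[OF assms(2)]])
qed (use partial_inner_sq_le[OF assms] in auto)

lemma partial_inner_norm: assumes "\<xi> \<in> l2" "F \<in> l2" shows "l2_norm (partial_inner \<xi> F) \<le> l2_norm \<xi> * l2_norm F"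
proof -
  have "(l2_norm (partial_inner \<xi> F))\<^sup>2 = (\<Sum>\<^sub>\<infinity>b. (cmod (partial_inner \<xi> F b))\<^sup>2)" by (rule l2_norm_sq)
  also have "\<dots> \<le> (\<Sum>\<^sub>\<infinity>b. (l2_norm \<xi>)\<^sup>2 * (\<Sum>\<^sub>\<infinity>a. (cmod (F (a,b)))\<^sup>2))"
    by (rule infsum_mono) (use partial_inner_l2[OF assms] summable_on_cmult_right[OF column_sq_norms(1)[OF assms(2)]]
       partial_inner_sq_le[OF assms] in \<open>auto simp: l2_iff_summable\<close>)
  also have "\<dots> = (l2_norm \<xi> * l2_norm F)\<^sup>2"
    by (simp add: infsum_cmult_right' column_sq_norms(2)[OF assms(2)] power_mult_distrib)
  finally show ?thesis
    by (meson l2_norm_nonneg mult_nonneg_nonneg power2_le_imp_le)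
qed

lemma partial_inner_inner: assumes "\<xi> \<in> l2" "\<eta> \<in> l2" "F \<in> l2"
  shows "l2_inner \<eta> (partial_inner \<xi> F) = l2_inner (tensor \<xi> \<eta>) F"
proof -
  define h where "h p = cnj (tensor \<xi> \<eta> p) * F p" for p
  have hs: "h summable_on UNIV" unfolding h_def
    by (rule l2_prod_summable[OF tensor_l2[OF assms(1,2)] assms(3)])
  have S: "(\<lambda>(x,y). (\<lambda>b a. h (a,b)) x y) summable_on Sigma UNIV (\<lambda>_. UNIV)"
    using hs swap_summable[of h] by simp
  have "l2_inner \<eta> (partial_inner \<xi> F) = (\<Sum>\<^sub>\<infinity>b. \<Sum>\<^sub>\<infinity>a. h (a,b))"
    unfolding l2_inner_def partial_inner_def h_def
    by (simp add: infsum_cmult_right'[symmetric] tensor_app mult.assoc mult.left_commute)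
  also have "\<dots> = infsum (\<lambda>(b,a). h (a,b)) UNIV"
    using infsum_Sigma'_banach[OF S] by simp
  also have "\<dots> = infsum h UNIV" by (rule swap_infsum)
  finally show ?thesis unfolding h_def l2_inner_def by simp
qed

lemma partial_inner_add: assumes "\<xi> \<in> l2" "F \<in> l2" "G \<in> l2"
  shows "partial_inner \<xi> (\<lambda>p. F p + G p) = (\<lambda>b. partial_inner \<xi> F b + partial_inner \<xi> G b)"
  unfolding partial_inner_def using inner_add_right[OF assms(1) l2_column[OF assms(2)] l2_column[OF assms(3)]] by simp

lemma partial_inner_diff: assumes "\<xi> \<in> l2" "F \<in> l2" "G \<in> l2"
  shows "partial_inner \<xi> (\<lambda>p. F p - G p) = (\<lambda>b. partial_inner \<xi> F b - partial_inner \<xi> G b)"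
  unfolding partial_inner_def using inner_diff_right[OF assms(1) l2_column[OF assms(2)] l2_column[OF assms(3)]] by simp

lemma partial_inner_scale: "partial_inner \<xi> (\<lambda>p. c * F p) = (\<lambda>b. c * partial_inner \<xi> F b)"
  unfolding partial_inner_def by (rule ext) (rule inner_scale_right)

lemma partial_inner_tensor: "partial_inner \<xi> (tensor w \<eta>) = (\<lambda>b. l2_inner \<xi> w * \<eta> b)"
  unfolding partial_inner_def tensor_app using inner_scale_right[of \<xi> _ w]
  by (simp add: mult.commute)

definition partial_inner2 :: "('b \<Rightarrow> complex) \<Rightarrow> ('a \<times> 'b \<Rightarrow> complex) \<Rightarrow> ('a \<Rightarrow> complex)" where
  "partial_inner2 \<omega> F = partial_inner \<omega> (\<lambda>(x,y). F (y,x))"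

lemma partial_inner2_l2: assumes "\<omega> \<in> l2" "F \<in> l2" shows "partial_inner2 \<omega> F \<in> l2"
  unfolding partial_inner2_def by (rule partial_inner_l2[OF assms(1) swap_l2[OF assms(2)]])

lemma partial_inner2_inner: assumes "\<omega> \<in> l2" "u \<in> l2" "F \<in> l2"
  shows "l2_inner u (partial_inner2 \<omega> F) = l2_inner (tensor u \<omega>) F"
proof -
  have "l2_inner u (partial_inner2 \<omega> F) = l2_inner (tensor \<omega> u) (\<lambda>(x,y). F (y,x))"
    unfolding partial_inner2_def by (rule partial_inner_inner[OF assms(1,2) swap_l2[OF assms(3)]])
  also have "tensor \<omega> u = (\<lambda>(x,y). tensor u \<omega> (y,x))" by (auto simp: tensor_def)
  finally show ?thesis using swap_inner by simp
qed

lemma partial_inner2_add: assumes "\<omega> \<in> l2" "F \<in> l2" "G \<in> l2"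
  shows "partial_inner2 \<omega> (\<lambda>p. F p + G p) = (\<lambda>a. partial_inner2 \<omega> F a + partial_inner2 \<omega> G a)"
proof -
  have "(\<lambda>(x,y). (\<lambda>p. F p + G p) (y,x)) = (\<lambda>p. (\<lambda>(x,y). F (y,x)) p + (\<lambda>(x,y). G (y,x)) p)"
    by (auto simp: fun_eq_iff)
  then show ?thesis unfolding partial_inner2_def
    using partial_inner_add[OF assms(1) swap_l2[OF assms(2)] swap_l2[OF assms(3)]] by simp
qed

lemma partial_inner2_scale: "partial_inner2 \<omega> (\<lambda>p. c * F p) = (\<lambda>a. c * partial_inner2 \<omega> F a)"
proof -
  have "(\<lambda>(x,y). (\<lambda>p. c * F p) (y,x)) = (\<lambda>p. c * (\<lambda>(x,y). F (y,x)) p)"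
    by (auto simp: fun_eq_iff)
  then show ?thesis unfolding partial_inner2_def using partial_inner_scale by simp
qed

lemma partial_inner2_norm: assumes "\<omega> \<in> l2" "F \<in> l2" shows "l2_norm (partial_inner2 \<omega> F) \<le> l2_norm \<omega> * l2_norm F"
  unfolding partial_inner2_def using partial_inner_norm[OF assms(1) swap_l2[OF assms(2)]] swap_norm[OF assms(2)] by simp

section \<open>Bounded and unitary operators\<close>

lemma l2_ext_by_inner: assumes "\<And>x. x \<in> l2 \<Longrightarrow> l2_inner x f = l2_inner x g" shows "f = g"
proof
  fix j show "f j = g j"
    using assms[OF l2_delta[of j]] by (simp add: inner_delta)
qed

lemma bdd_l2: "bdd_op A \<Longrightarrow> f \<in> l2 \<Longrightarrow> A f \<in> l2"
  by (simp add: bdd_op_def)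

lemma bdd_add: "bdd_op A \<Longrightarrow> f \<in> l2 \<Longrightarrow> g \<in> l2 \<Longrightarrow> A (\<lambda>i. f i + g i) = (\<lambda>j. A f j + A g j)"
  by (simp add: bdd_op_def)

lemma bdd_scale: "bdd_op A \<Longrightarrow> f \<in> l2 \<Longrightarrow> A (\<lambda>i. c * f i) = (\<lambda>j. c * A f j)"
  by (simp add: bdd_op_def)

lemma bdd_bound: "bdd_op A \<Longrightarrow> \<exists>C. \<forall>f\<in>l2. l2_norm (A f) \<le> C * l2_norm f"
  by (simp add: bdd_op_def)

lemma bdd_diff: assumes "bdd_op A" "f \<in> l2" "g \<in> l2" shows "A (\<lambda>i. f i - g i) = (\<lambda>j. A f j - A g j)"
proof -
  have "A (\<lambda>i. f i - g i) = A (\<lambda>i. f i + (-1) * g i)" by simp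
  also have "\<dots> = (\<lambda>j. A f j + A (\<lambda>i. (-1) * g i) j)" by (rule bdd_add[OF assms(1,2) l2_scale[OF assms(3)]])
  also have "\<dots> = (\<lambda>j. A f j - A g j)" using bdd_scale[OF assms(1,3), of "-1"] by simp
  finally show ?thesis .
qed

lemma bdd_zero: assumes "bdd_op A" shows "A (\<lambda>i. 0) = (\<lambda>j. 0)"
  using bdd_scale[OF assms l2_zero, of 0] by simp

lemma partial_inner_tensor_bdd:
  assumes A: "bdd_op A" and u: "u \<in> l2" and v: "v \<in> l2"
  shows "bdd_op (\<lambda>\<xi>. partial_inner u (A (tensor v \<xi>)))"
  unfolding bdd_op_def
proof (intro conjI ballI allI)
  fix f g :: "'b \<Rightarrow> complex" assume f: "f \<in> l2" and g: "g \<in> l2"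
  show "partial_inner u (A (tensor v (\<lambda>i. f i + g i)))
      = (\<lambda>j. partial_inner u (A (tensor v f)) j + partial_inner u (A (tensor v g)) j)"
    unfolding tensor_add_right bdd_add[OF A tensor_l2[OF v f] tensor_l2[OF v g]]
    by (rule partial_inner_add[OF u bdd_l2[OF A tensor_l2[OF v f]] bdd_l2[OF A tensor_l2[OF v g]]])
next
  fix f :: "'b \<Rightarrow> complex" and c assume f: "f \<in> l2"
  show "partial_inner u (A (tensor v (\<lambda>i. c * f i))) = (\<lambda>j. c * partial_inner u (A (tensor v f)) j)"
    unfolding tensor_scale_right bdd_scale[OF A tensor_l2[OF v f]] by (rule partial_inner_scale)
next
  fix f :: "'b \<Rightarrow> complex" assume f: "f \<in> l2"
  show "partial_inner u (A (tensor v f)) \<in> l2"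
    by (rule partial_inner_l2[OF u bdd_l2[OF A tensor_l2[OF v f]]])
next
  obtain C where C: "\<forall>f\<in>l2. l2_norm (A f) \<le> C * l2_norm f" using bdd_bound[OF A] by blast
  have "l2_norm (partial_inner u (A (tensor v f))) \<le> (l2_norm u * C * l2_norm v) * l2_norm f"
    if f: "f \<in> l2" for f :: "'b \<Rightarrow> complex"
  proof -
    have "l2_norm (partial_inner u (A (tensor v f))) \<le> l2_norm u * l2_norm (A (tensor v f))"
      by (rule partial_inner_norm[OF u bdd_l2[OF A tensor_l2[OF v f]]])
    also have "\<dots> \<le> l2_norm u * (C * (l2_norm v * l2_norm f))"
      using C tensor_l2[OF v f] tensor_norm[OF v f] l2_norm_nonneg[of u] by (metis mult_left_mono)
    finally show ?thesis by (simp add: ac_simps)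
  qed
  then show "\<exists>C. \<forall>f\<in>l2. l2_norm (partial_inner u (A (tensor v f))) \<le> C * l2_norm f" by blast
qed

lemma partial_inner2_tensor_bdd:
  assumes A: "bdd_op A" and \<omega>: "\<omega> \<in> l2"
  shows "bdd_op (\<lambda>v. partial_inner2 \<omega> (A (tensor v \<omega>)))"
  unfolding bdd_op_def
proof (intro conjI ballI allI)
  fix f g :: "'a \<Rightarrow> complex" assume f: "f \<in> l2" and g: "g \<in> l2"
  show "partial_inner2 \<omega> (A (tensor (\<lambda>i. f i + g i) \<omega>))
      = (\<lambda>j. partial_inner2 \<omega> (A (tensor f \<omega>)) j + partial_inner2 \<omega> (A (tensor g \<omega>)) j)"
    unfolding tensor_add_left bdd_add[OF A tensor_l2[OF f \<omega>] tensor_l2[OF g \<omega>]]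
    by (rule partial_inner2_add[OF \<omega> bdd_l2[OF A tensor_l2[OF f \<omega>]] bdd_l2[OF A tensor_l2[OF g \<omega>]]])
next
  fix f :: "'a \<Rightarrow> complex" and c assume f: "f \<in> l2"
  show "partial_inner2 \<omega> (A (tensor (\<lambda>i. c * f i) \<omega>)) = (\<lambda>j. c * partial_inner2 \<omega> (A (tensor f \<omega>)) j)"
    unfolding tensor_scale_left bdd_scale[OF A tensor_l2[OF f \<omega>]] by (rule partial_inner2_scale)
next
  fix f :: "'a \<Rightarrow> complex" assume f: "f \<in> l2"
  show "partial_inner2 \<omega> (A (tensor f \<omega>)) \<in> l2"
    by (rule partial_inner2_l2[OF \<omega> bdd_l2[OF A tensor_l2[OF f \<omega>]]])
next
  obtain C where C: "\<forall>f\<in>l2. l2_norm (A f) \<le> C * l2_norm f" using bdd_bound[OF A] by blast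
  have "l2_norm (partial_inner2 \<omega> (A (tensor f \<omega>))) \<le> (l2_norm \<omega> * C * l2_norm \<omega>) * l2_norm f"
    if f: "f \<in> l2" for f :: "'a \<Rightarrow> complex"
  proof -
    have "l2_norm (partial_inner2 \<omega> (A (tensor f \<omega>))) \<le> l2_norm \<omega> * l2_norm (A (tensor f \<omega>))"
      by (rule partial_inner2_norm[OF \<omega> bdd_l2[OF A tensor_l2[OF f \<omega>]]])
    also have "\<dots> \<le> l2_norm \<omega> * (C * (l2_norm f * l2_norm \<omega>))"
      using C tensor_l2[OF f \<omega>] tensor_norm[OF f \<omega>] l2_norm_nonneg[of \<omega>] by (metis mult_left_mono)
    finally show ?thesis by (simp add: ac_simps)
  qed
  then show "\<exists>C. \<forall>f\<in>l2. l2_norm (partial_inner2 \<omega> (A (tensor f \<omega>))) \<le> C * l2_norm f" by blast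
qed

lemma partial_op_char:
  fixes A :: "('a \<times> 'b \<Rightarrow> complex) \<Rightarrow> ('a \<times> 'b \<Rightarrow> complex)"
  assumes A: "bdd_op A" and u: "u \<in> l2" and v: "v \<in> l2"
  shows "bdd_op (partial_op A u v)"
    and "\<And>\<xi>. \<xi> \<in> l2 \<Longrightarrow> partial_op A u v \<xi> = partial_inner u (A (tensor v \<xi>))"
proof -
  define B where "B \<xi> = partial_inner u (A (tensor v \<xi>))" for \<xi>
  have B: "\<forall>\<xi>1\<in>l2. \<forall>\<xi>2\<in>l2. l2_inner \<xi>1 (B \<xi>2) = l2_inner (tensor u \<xi>1) (A (tensor v \<xi>2))"
    unfolding B_def using partial_inner_inner[OF u _ bdd_l2[OF A tensor_l2[OF v]]] by blast
  have "\<exists>B. bdd_op B \<and> (\<forall>\<xi>1\<in>l2. \<forall>\<xi>2\<in>l2. l2_inner \<xi>1 (B \<xi>2) = l2_inner (tensor u \<xi>1) (A (tensor v \<xi>2)))"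
    using partial_inner_tensor_bdd[OF A u v] B unfolding B_def by blast
  then have P: "bdd_op (partial_op A u v) \<and> (\<forall>\<xi>1\<in>l2. \<forall>\<xi>2\<in>l2.
      l2_inner \<xi>1 (partial_op A u v \<xi>2) = l2_inner (tensor u \<xi>1) (A (tensor v \<xi>2)))"
    unfolding partial_op_def by (rule someI_ex)
  then show "bdd_op (partial_op A u v)" by blast
  show "partial_op A u v \<xi> = partial_inner u (A (tensor v \<xi>))" if "\<xi> \<in> l2" for \<xi>
    using P B that unfolding B_def[symmetric] by (intro l2_ext_by_inner) auto
qed

lemma partial_op_inner:
  assumes "bdd_op A" "u \<in> l2" "v \<in> l2" "\<xi>1 \<in> l2" "\<xi>2 \<in> l2"
  shows "l2_inner \<xi>1 (partial_op A u v \<xi>2) = l2_inner (tensor u \<xi>1) (A (tensor v \<xi>2))"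
  using partial_op_char(2)[OF assms(1-3) assms(5)] partial_inner_inner[OF assms(2,4) bdd_l2[OF assms(1) tensor_l2[OF assms(3,5)]]]
  by simp

lemma unitary_bdd: "unitary_op V \<Longrightarrow> bdd_op V" by (simp add: unitary_op_def)

lemma unitary_isom: "unitary_op V \<Longrightarrow> f \<in> l2 \<Longrightarrow> g \<in> l2 \<Longrightarrow> l2_inner (V f) (V g) = l2_inner f g"
  by (simp add: unitary_op_def)

lemma unitary_surj: "unitary_op V \<Longrightarrow> g \<in> l2 \<Longrightarrow> \<exists>f\<in>l2. V f = g"
  unfolding unitary_op_def by (metis imageE)

lemma unitary_inj: assumes V: "unitary_op V" and "x \<in> l2" "y \<in> l2" "V x = V y" shows "x = y"
proof -
  have d: "(\<lambda>i. x i - y i) \<in> l2" using assms by (simp add: l2_diff)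
  have "V (\<lambda>i. x i - y i) = (\<lambda>j. 0)" using bdd_diff[OF unitary_bdd[OF V] assms(2,3)] assms(4) by simp
  then have "l2_inner (\<lambda>i. x i - y i) (\<lambda>i. x i - y i) = 0"
    using unitary_isom[OF V d d] by (simp add: inner_zero_left)
  then have "l2_norm (\<lambda>i. x i - y i) = 0" using inner_self[OF d] by simp
  then show ?thesis using l2_norm_zero[OF d] by auto
qed

definition unitary_inv :: "(('i \<Rightarrow> complex) \<Rightarrow> ('i \<Rightarrow> complex)) \<Rightarrow> ('i \<Rightarrow> complex) \<Rightarrow> ('i \<Rightarrow> complex)"
  where "unitary_inv V f = (SOME g. g \<in> l2 \<and> V g = f)"

lemma unitary_inv:
  fixes V :: "('i \<Rightarrow> complex) \<Rightarrow> ('i \<Rightarrow> complex)"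
  assumes V: "unitary_op V" and f: "f \<in> l2"
  shows "unitary_inv V f \<in> l2" and "V (unitary_inv V f) = f"
proof -
  have "\<exists>g. g \<in> l2 \<and> V g = f" using unitary_surj[OF V f] by blast
  then have "unitary_inv V f \<in> l2 \<and> V (unitary_inv V f) = f" unfolding unitary_inv_def by (rule someI_ex)
  then show "unitary_inv V f \<in> l2" and "V (unitary_inv V f) = f" by auto
qed

lemma unitary_inv_inner:
  fixes V :: "('i \<Rightarrow> complex) \<Rightarrow> ('i \<Rightarrow> complex)"
  assumes V: "unitary_op V" and f: "f \<in> l2" and g: "g \<in> l2"
  shows "l2_inner (unitary_inv V f) g = l2_inner f (V g)"
  using unitary_isom[OF V unitary_inv(1)[OF V f] g] unitary_inv(2)[OF V f] by simp

lemma unitary_inv_bdd: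
  fixes V :: "('i \<Rightarrow> complex) \<Rightarrow> ('i \<Rightarrow> complex)"
  assumes V: "unitary_op V"
  shows "bdd_op (unitary_inv V)"
  unfolding bdd_op_def
proof (intro conjI ballI allI)
  note R = unitary_inv[OF V]
  fix f g :: "'i \<Rightarrow> complex" assume f: "f \<in> l2" and g: "g \<in> l2"
  show "unitary_inv V (\<lambda>i. f i + g i) = (\<lambda>j. unitary_inv V f j + unitary_inv V g j)"
    by (rule unitary_inj[OF V])
      (use R[OF l2_add[OF f g]] R[OF f] R[OF g] bdd_add[OF unitary_bdd[OF V], of "unitary_inv V f"]
        in \<open>auto intro: l2_add\<close>)
next
  note R = unitary_inv[OF V]
  fix f :: "'i \<Rightarrow> complex" and c assume f: "f \<in> l2"
  show "unitary_inv V (\<lambda>i. c * f i) = (\<lambda>j. c * unitary_inv V f j)"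
    by (rule unitary_inj[OF V])
      (use R[OF l2_scale[OF f]] R[OF f] bdd_scale[OF unitary_bdd[OF V], of "unitary_inv V f" c]
        in \<open>auto intro: l2_scale\<close>)
next
  fix f :: "'i \<Rightarrow> complex" assume "f \<in> l2"
  then show "unitary_inv V f \<in> l2" by (rule unitary_inv(1)[OF V])
next
  have "l2_norm (unitary_inv V f) \<le> 1 * l2_norm f" if f: "f \<in> l2" for f :: "'i \<Rightarrow> complex"
  proof -
    have "(l2_norm (unitary_inv V f))\<^sup>2 = (l2_norm f)\<^sup>2"
      using unitary_inv_inner[OF V f unitary_inv(1)[OF V f]] unitary_inv(2)[OF V f]
        l2_norm_sq_inner[OF f] l2_norm_sq_inner[OF unitary_inv(1)[OF V f]] by simp
    then show ?thesis using l2_norm_nonneg[of f] l2_norm_nonneg[of "unitary_inv V f"]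
      by (simp add: power2_eq_iff_nonneg)
  qed
  then show "\<exists>C. \<forall>f\<in>l2. l2_norm (unitary_inv V f) \<le> C * l2_norm f" by blast
qed

lemma adjoint_op_eq_unitary_inv:
  fixes V :: "('i \<Rightarrow> complex) \<Rightarrow> ('i \<Rightarrow> complex)"
  assumes V: "unitary_op V" and f: "f \<in> l2"
  shows "adjoint_op V f = unitary_inv V f"
    and "bdd_op (adjoint_op V)"
    and "\<And>f g. f \<in> l2 \<Longrightarrow> g \<in> l2 \<Longrightarrow> l2_inner (adjoint_op V f) g = l2_inner f (V g)"
proof -
  have "\<exists>B. bdd_op B \<and> (\<forall>f\<in>l2. \<forall>g::'i\<Rightarrow>complex\<in>l2. l2_inner (B f) g = l2_inner f (V g))"
    using unitary_inv_bdd[OF V] unitary_inv_inner[OF V] by blast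
  then have P: "bdd_op (adjoint_op V) \<and> (\<forall>f\<in>l2. \<forall>g\<in>l2. l2_inner (adjoint_op V f) g = l2_inner f (V g))"
    unfolding adjoint_op_def by (rule someI_ex)
  then show "bdd_op (adjoint_op V)"
    and adj: "\<And>f g. f \<in> l2 \<Longrightarrow> g \<in> l2 \<Longrightarrow> l2_inner (adjoint_op V f) g = l2_inner f (V g)" by auto
  show "adjoint_op V f = unitary_inv V f"
  proof (rule l2_ext_by_inner)
    fix x :: "'i \<Rightarrow> complex" assume x: "x \<in> l2"
    have "l2_inner x (adjoint_op V f) = cnj (l2_inner (adjoint_op V f) x)" by (rule inner_cnj)
    also have "\<dots> = cnj (l2_inner (unitary_inv V f) x)"
      using adj[OF f x] unitary_inv_inner[OF V f x] by simp
    also have "\<dots> = l2_inner x (unitary_inv V f)" by (simp add: inner_cnj[of x])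
    finally show "l2_inner x (adjoint_op V f) = l2_inner x (unitary_inv V f)" .
  qed
qed

lemma unitary_adjoint:
  fixes V :: "('i \<Rightarrow> complex) \<Rightarrow> ('i \<Rightarrow> complex)"
  assumes V: "unitary_op V"
  shows "bdd_op (adjoint_op V)"
    and "\<And>f g. f \<in> l2 \<Longrightarrow> g \<in> l2 \<Longrightarrow> l2_inner (adjoint_op V f) g = l2_inner f (V g)"
    and "\<And>f. f \<in> l2 \<Longrightarrow> V (adjoint_op V f) = f"
    and "\<And>f. f \<in> l2 \<Longrightarrow> adjoint_op V (V f) = f"
proof -
  show "bdd_op (adjoint_op V)"
    and "\<And>f g. f \<in> l2 \<Longrightarrow> g \<in> l2 \<Longrightarrow> l2_inner (adjoint_op V f) g = l2_inner f (V g)"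
    using adjoint_op_eq_unitary_inv[OF V l2_zero] by auto
  show "V (adjoint_op V f) = f" if "f \<in> l2" for f
    using adjoint_op_eq_unitary_inv(1)[OF V that] unitary_inv(2)[OF V that] by simp
  show "adjoint_op V (V f) = f" if f: "f \<in> l2" for f
  proof -
    have Vf: "V f \<in> l2" by (rule bdd_l2[OF unitary_bdd[OF V] f])
    show ?thesis
      using adjoint_op_eq_unitary_inv(1)[OF V Vf] unitary_inv[OF V Vf] unitary_inj[OF V _ f] by auto
  qed
qed

lemma adjoint_unitary: fixes V :: "('i \<Rightarrow> complex) \<Rightarrow> ('i \<Rightarrow> complex)" assumes V: "unitary_op V" shows "unitary_op (adjoint_op V)"
  unfolding unitary_op_def
proof (intro conjI ballI)
  show "bdd_op (adjoint_op V)" by (rule unitary_adjoint(1)[OF V])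
  show "adjoint_op V ` l2 = l2"
  proof
    show "adjoint_op V ` l2 \<subseteq> l2" using bdd_l2[OF unitary_adjoint(1)[OF V]] by blast
    show "l2 \<subseteq> adjoint_op V ` l2"
    proof
      fix g :: "'i \<Rightarrow> complex" assume g: "g \<in> l2"
      then have "g = adjoint_op V (V g)" using unitary_adjoint(4)[OF V] by simp
      then show "g \<in> adjoint_op V ` l2" using bdd_l2[OF unitary_bdd[OF V] g] by blast
    qed
  qed
  fix f g :: "'i \<Rightarrow> complex" assume f: "f \<in> l2" and g: "g \<in> l2"
  show "l2_inner (adjoint_op V f) (adjoint_op V g) = l2_inner f g"
    using unitary_adjoint(2)[OF V f bdd_l2[OF unitary_adjoint(1)[OF V] g]] unitary_adjoint(3)[OF V g] by simp
qed

section \<open>Increments of a unitary evolution\<close>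

type_synonym 'a word = "(bool \<times> ('a \<Rightarrow> complex) \<times> ('a \<Rightarrow> complex)) list"

lemma vecs_ok'_Cons[simp]: "vecs_ok' ((e,u,v) # xs) \<longleftrightarrow> u \<in> l2 \<and> v \<in> l2 \<and> vecs_ok' xs"
  by (auto simp: vecs_ok'_def)

lemma vecs_ok'_Nil[simp]: "vecs_ok' []" by (simp add: vecs_ok'_def)

lemma vecs_ok'_append[simp]: "vecs_ok' (xs @ ys) \<longleftrightarrow> vecs_ok' xs \<and> vecs_ok' ys"
  by (simp add: vecs_ok'_def ball_Un)

definition adjoint_word :: "'a word \<Rightarrow> 'a word" where
  "adjoint_word xs = rev (map (\<lambda>(e,u,v). (\<not> e, v, u)) xs)"

lemma adjoint_word_Cons[simp]: "adjoint_word ((e,u,v) # xs) = adjoint_word xs @ [(\<not> e, v, u)]"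
  by (simp add: adjoint_word_def)

lemma adjoint_word_Nil[simp]: "adjoint_word [] = []" by (simp add: adjoint_word_def)

lemma vecs_ok'_adjoint_word: "vecs_ok' xs \<Longrightarrow> vecs_ok' (adjoint_word xs)"
  by (auto simp: adjoint_word_def vecs_ok'_def)

lemma length_adjoint_word[simp]: "length (adjoint_word xs) = length xs" by (simp add: adjoint_word_def)

definition inner_word :: "'a word \<Rightarrow> complex" where
  "inner_word ys = (\<Prod>(e, p, w)\<leftarrow>ys. l2_inner p w)"

lemma inner_word_Cons[simp]: "inner_word ((e,p,w) # ys) = l2_inner p w * inner_word ys"
  by (simp add: inner_word_def)

(* Multiplying out prod_k (X_k + <p_k, w_k>) with X_k = (U^(e_k)_t - 1)(p_k, w_k): each pair (c, ws)
   stands for the term c * X_ws, and the constant term inner_word ys is left out. *)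
fun incr_expansion :: "'a word \<Rightarrow> (complex \<times> 'a word) list" where
  "incr_expansion [] = []"
| "incr_expansion ((e,p,w) # ys) = map (\<lambda>(c,ws). (c, (e,p,w) # ws)) (incr_expansion ys) @ [(inner_word ys, [(e,p,w)])]
      @ map (\<lambda>(c,ws). (l2_inner p w * c, ws)) (incr_expansion ys)"

lemma incr_expansion_words: "(c, ws) \<in> set (incr_expansion ys) \<Longrightarrow> ws \<noteq> [] \<and> set ws \<subseteq> set ys"
  by (induction ys arbitrary: c ws rule: incr_expansion.induct) fastforce+

lemma vecs_ok'_incr_expansion: "vecs_ok' ys \<Longrightarrow> (c, ws) \<in> set (incr_expansion ys) \<Longrightarrow> vecs_ok' ws"
  using incr_expansion_words unfolding vecs_ok'_def by blast

locale unitary_evolution =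
  fixes U :: "('a, 'b) evol" and \<Omega> :: "'b \<Rightarrow> complex"
  assumes unitary_U: "unitary_family U"
    and Omega_l2: "\<Omega> \<in> l2" and Omega_norm: "l2_norm \<Omega> = 1"
begin

definition Ut :: "bool \<Rightarrow> real \<Rightarrow> ('a \<times> 'b \<Rightarrow> complex) \<Rightarrow> ('a \<times> 'b \<Rightarrow> complex)" where
  "Ut e t = Ueps U e 0 t"

definition Ut_m1 :: "bool \<Rightarrow> real \<Rightarrow> ('a \<times> 'b \<Rightarrow> complex) \<Rightarrow> ('a \<times> 'b \<Rightarrow> complex)" where
  "Ut_m1 e t = (\<lambda>f x. Ut e t f x - f x)"

abbreviation incr :: "bool \<Rightarrow> real \<Rightarrow> ('a \<Rightarrow> complex) \<Rightarrow> ('a \<Rightarrow> complex) \<Rightarrow> ('b \<Rightarrow> complex) \<Rightarrow> ('b \<Rightarrow> complex)"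
  where "incr e t u v \<equiv> fact_m1 U e 0 t u v"

lemma incr_eq_partial_op: "incr e t u v = partial_op (Ut_m1 e t) u v"
  by (simp add: fact_m1_def Ut_m1_def Ut_def)

lemma U_unitary: "0 \<le> t \<Longrightarrow> unitary_op (U 0 t)"
  using unitary_U by (simp add: unitary_family_def)

lemma Ut_unitary: "0 \<le> t \<Longrightarrow> unitary_op (Ut e t)"
  by (cases e) (auto simp: Ut_def Ueps_def U_unitary adjoint_unitary)

lemma Ut_bdd: "0 \<le> t \<Longrightarrow> bdd_op (Ut e t)"
  using Ut_unitary unitary_bdd by blast

lemma Ut_l2: "0 \<le> t \<Longrightarrow> f \<in> l2 \<Longrightarrow> Ut e t f \<in> l2"
  using Ut_bdd bdd_l2 by blast

lemma Ut_isometric: "0 \<le> t \<Longrightarrow> f \<in> l2 \<Longrightarrow> g \<in> l2 \<Longrightarrow> l2_inner (Ut e t f) (Ut e t g) = l2_inner f g"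
  using Ut_unitary unitary_isom by blast

lemma Ut_adjoint: assumes t: "0 \<le> t" and f: "f \<in> l2" and g: "g \<in> l2"
  shows "l2_inner (Ut e t f) g = l2_inner f (Ut (\<not> e) t g)"
proof (cases e)
  case True
  then show ?thesis using unitary_adjoint(2)[OF U_unitary[OF t] f g] by (simp add: Ut_def Ueps_def)
next
  case False
  have a: "adjoint_op (U 0 t) g \<in> l2" using bdd_l2[OF unitary_adjoint(1)[OF U_unitary[OF t]] g] .
  have "l2_inner (U 0 t f) g = l2_inner (U 0 t f) (U 0 t (adjoint_op (U 0 t) g))"
    using unitary_adjoint(3)[OF U_unitary[OF t] g] by simp
  also have "\<dots> = l2_inner f (adjoint_op (U 0 t) g)" using unitary_isom[OF U_unitary[OF t] f a] .
  finally show ?thesis using False by (simp add: Ut_def Ueps_def)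
qed

lemma Ut_norm: assumes "0 \<le> t" "f \<in> l2" shows "l2_norm (Ut e t f) = l2_norm f"
proof -
  have "(l2_norm (Ut e t f))\<^sup>2 = (l2_norm f)\<^sup>2"
    using Ut_isometric[of t f f e] l2_norm_sq_inner[of f] l2_norm_sq_inner[of "Ut e t f"] Ut_l2[of t f e] assms by simp
  then show ?thesis using l2_norm_nonneg[of f] l2_norm_nonneg[of "Ut e t f"] by (simp add: power2_eq_iff_nonneg)
qed

lemma Ut_m1_apply: "Ut_m1 e t f = (\<lambda>x. Ut e t f x - f x)" by (simp add: Ut_m1_def)

lemma Ut_m1_l2: "0 \<le> t \<Longrightarrow> f \<in> l2 \<Longrightarrow> Ut_m1 e t f \<in> l2"
  unfolding Ut_m1_def by (rule l2_diff) (auto intro: Ut_l2)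

lemma Ut_m1_bdd: assumes t: "0 \<le> t" shows "bdd_op (Ut_m1 e t)"
  unfolding bdd_op_def
proof (intro conjI ballI allI)
  fix f :: "'a \<times> 'b \<Rightarrow> complex" assume "f \<in> l2" then show "Ut_m1 e t f \<in> l2" using Ut_m1_l2[OF t] by blast
next
  fix f g :: "'a \<times> 'b \<Rightarrow> complex" assume f: "f \<in> l2" and g: "g \<in> l2"
  show "Ut_m1 e t (\<lambda>i. f i + g i) = (\<lambda>j. Ut_m1 e t f j + Ut_m1 e t g j)"
    unfolding Ut_m1_def using bdd_add[OF Ut_bdd[OF t] f g] by (simp add: algebra_simps)
next
  fix f :: "'a \<times> 'b \<Rightarrow> complex" and c assume f: "f \<in> l2"
  show "Ut_m1 e t (\<lambda>i. c * f i) = (\<lambda>j. c * Ut_m1 e t f j)"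
    unfolding Ut_m1_def using bdd_scale[OF Ut_bdd[OF t] f] by (simp add: algebra_simps)
next
  show "\<exists>C. \<forall>f\<in>l2. l2_norm (Ut_m1 e t f) \<le> C * l2_norm f"
  proof (intro exI ballI)
    fix f :: "'a \<times> 'b \<Rightarrow> complex" assume f: "f \<in> l2"
    show "l2_norm (Ut_m1 e t f) \<le> 2 * l2_norm f"
      unfolding Ut_m1_def using l2_norm_diff_triangle[OF Ut_l2[OF t f] f] Ut_norm[OF t f] by simp
  qed
qed

lemma Ut_m1_adjoint: assumes t: "0 \<le> t" and f: "f \<in> l2" and g: "g \<in> l2"
  shows "l2_inner (Ut_m1 e t f) g = l2_inner f (Ut_m1 (\<not> e) t g)"
  unfolding Ut_m1_def using Ut_adjoint[OF t f g] Ut_l2[OF t] f g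
  by (simp add: inner_diff_left inner_diff_right)

lemma Ut_m1_norm_sq: assumes t: "0 \<le> t" and f: "f \<in> l2"
  shows "(l2_norm (Ut_m1 e t f))\<^sup>2 = - 2 * Re (l2_inner f (Ut_m1 e t f))"
proof -
  have "(l2_norm (Ut_m1 e t f))\<^sup>2 = (l2_norm (Ut e t f))\<^sup>2 - 2 * Re (l2_inner (Ut e t f) f) + (l2_norm f)\<^sup>2"
    unfolding Ut_m1_def by (rule l2_norm_diff_sq[OF Ut_l2[OF t f] f])
  moreover have "Re (l2_inner (Ut e t f) f) = Re (l2_inner f (Ut e t f))"
    using inner_cnj[of "Ut e t f" f] by simp
  moreover have "l2_inner f (Ut_m1 e t f) = l2_inner f (Ut e t f) - l2_inner f f"
    unfolding Ut_m1_def by (rule inner_diff_right[OF f Ut_l2[OF t f] f])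
  ultimately show ?thesis using Ut_norm[OF t f] inner_self_Re[OF f] by simp
qed

lemma inner_Ut_m1_sum_adjoint: assumes t: "0 \<le> t" and a: "a \<in> l2" and b: "b \<in> l2"
  shows "l2_inner a (Ut_m1 False t b) + l2_inner a (Ut_m1 True t b) = - l2_inner (Ut_m1 False t a) (Ut_m1 False t b)"
proof -
  have "l2_inner (Ut_m1 False t a) (Ut_m1 False t b) = l2_inner (Ut False t a) (Ut_m1 False t b) - l2_inner a (Ut_m1 False t b)"
    unfolding Ut_m1_apply[of False t a] by (rule inner_diff_left[OF Ut_l2[OF t a] a Ut_m1_l2[OF t b]])
  also have "l2_inner (Ut False t a) (Ut_m1 False t b) = l2_inner (Ut False t a) (Ut False t b) - l2_inner (Ut False t a) b"
    unfolding Ut_m1_def by (rule inner_diff_right[OF Ut_l2[OF t a] Ut_l2[OF t b] b])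
  also have "l2_inner (Ut False t a) (Ut False t b) = l2_inner a b" by (rule Ut_isometric[OF t a b])
  also have "l2_inner (Ut False t a) b = l2_inner a (Ut True t b)" using Ut_adjoint[OF t a b, of False] by simp
  finally have 1: "l2_inner (Ut_m1 False t a) (Ut_m1 False t b) = l2_inner a b - l2_inner a (Ut True t b) - l2_inner a (Ut_m1 False t b)" .
  have 2: "l2_inner a (Ut_m1 True t b) = l2_inner a (Ut True t b) - l2_inner a b"
    unfolding Ut_m1_def by (rule inner_diff_right[OF a Ut_l2[OF t b] b])
  show ?thesis using 1 2 by simp
qed

lemma incr_bdd: "0 \<le> t \<Longrightarrow> u \<in> l2 \<Longrightarrow> v \<in> l2 \<Longrightarrow> bdd_op (incr e t u v)"
  unfolding incr_eq_partial_op by (rule partial_op_char(1)[OF Ut_m1_bdd])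

lemma incr_l2: "0 \<le> t \<Longrightarrow> u \<in> l2 \<Longrightarrow> v \<in> l2 \<Longrightarrow> \<xi> \<in> l2 \<Longrightarrow> incr e t u v \<xi> \<in> l2"
  using incr_bdd bdd_l2 by blast

lemma incr_eq_partial_inner: "0 \<le> t \<Longrightarrow> u \<in> l2 \<Longrightarrow> v \<in> l2 \<Longrightarrow> \<xi> \<in> l2 \<Longrightarrow> incr e t u v \<xi> = partial_inner u (Ut_m1 e t (tensor v \<xi>))"
  unfolding incr_eq_partial_op by (rule partial_op_char(2)[OF Ut_m1_bdd])

lemma inner_incr: "0 \<le> t \<Longrightarrow> u \<in> l2 \<Longrightarrow> v \<in> l2 \<Longrightarrow> \<xi>1 \<in> l2 \<Longrightarrow> \<xi>2 \<in> l2 \<Longrightarrow>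
   l2_inner \<xi>1 (incr e t u v \<xi>2) = l2_inner (tensor u \<xi>1) (Ut_m1 e t (tensor v \<xi>2))"
  unfolding incr_eq_partial_op by (rule partial_op_inner[OF Ut_m1_bdd])

lemma incr_adjoint: assumes t: "0 \<le> t" and u: "u \<in> l2" and v: "v \<in> l2" and \<xi>: "\<xi> \<in> l2" and \<eta>: "\<eta> \<in> l2"
  shows "l2_inner (incr e t u v \<xi>) \<eta> = l2_inner \<xi> (incr (\<not> e) t v u \<eta>)"
proof -
  have "l2_inner (incr e t u v \<xi>) \<eta> = cnj (l2_inner \<eta> (incr e t u v \<xi>))" by (rule inner_cnj)
  also have "\<dots> = cnj (l2_inner (tensor u \<eta>) (Ut_m1 e t (tensor v \<xi>)))" using inner_incr[OF t u v \<eta> \<xi>] by simp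
  also have "\<dots> = l2_inner (Ut_m1 e t (tensor v \<xi>)) (tensor u \<eta>)" by (simp add: inner_cnj[of "Ut_m1 e t (tensor v \<xi>)"])
  also have "\<dots> = l2_inner (tensor v \<xi>) (Ut_m1 (\<not> e) t (tensor u \<eta>))"
    by (rule Ut_m1_adjoint[OF t tensor_l2[OF v \<xi>] tensor_l2[OF u \<eta>]])
  also have "\<dots> = l2_inner \<xi> (incr (\<not> e) t v u \<eta>)" using inner_incr[OF t v u \<xi> \<eta>] by simp
  finally show ?thesis .
qed

lemma incr_adjoint': assumes t: "0 \<le> t" and u: "u \<in> l2" and v: "v \<in> l2" and \<xi>: "\<xi> \<in> l2" and \<eta>: "\<eta> \<in> l2"
  shows "l2_inner \<xi> (incr e t u v \<eta>) = l2_inner (incr (\<not> e) t v u \<xi>) \<eta>"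
  using incr_adjoint[OF t v u \<xi> \<eta>, of "\<not> e"] by simp

lemma incr_norm: assumes t: "0 \<le> t" and u: "u \<in> l2" and v: "v \<in> l2" and \<xi>: "\<xi> \<in> l2"
  shows "l2_norm (incr e t u v \<xi>) \<le> l2_norm u * l2_norm (Ut_m1 e t (tensor v \<xi>))"
  unfolding incr_eq_partial_inner[OF t u v \<xi>] by (rule partial_inner_norm[OF u Ut_m1_l2[OF t tensor_l2[OF v \<xi>]]])

lemma incr_norm_sq: assumes t: "0 \<le> t" and u: "u \<in> l2" and v: "v \<in> l2" and \<xi>: "\<xi> \<in> l2"
  shows "(l2_norm (incr e t u v \<xi>))\<^sup>2 \<le> (l2_norm u)\<^sup>2 * (- 2 * Re (l2_inner \<xi> (incr e t v v \<xi>)))"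
proof -
  have "(l2_norm (incr e t u v \<xi>))\<^sup>2 \<le> (l2_norm u * l2_norm (Ut_m1 e t (tensor v \<xi>)))\<^sup>2"
    by (rule power_mono[OF incr_norm[OF assms] l2_norm_nonneg])
  also have "\<dots> = (l2_norm u)\<^sup>2 * (- 2 * Re (l2_inner (tensor v \<xi>) (Ut_m1 e t (tensor v \<xi>))))"
    by (simp add: power_mult_distrib Ut_m1_norm_sq[OF t tensor_l2[OF v \<xi>]])
  also have "l2_inner (tensor v \<xi>) (Ut_m1 e t (tensor v \<xi>)) = l2_inner \<xi> (incr e t v v \<xi>)"
    using inner_incr[OF t v v \<xi> \<xi>] by simp
  finally show ?thesis .
qed

lemma incr_norm_sq_le_cmod:
  assumes "0 \<le> t" and "u \<in> l2" and "v \<in> l2" and "\<xi> \<in> l2"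
  shows "(l2_norm (incr e t u v \<xi>))\<^sup>2 \<le> (l2_norm u)\<^sup>2 * (2 * cmod (l2_inner \<xi> (incr e t v v \<xi>)))"
  using incr_norm_sq[OF assms] mult_left_mono[OF minus_Re_le_cmod zero_le_power2] by (rule order_trans)

lemma incr_norm_bound: assumes t: "0 \<le> t" and u: "u \<in> l2" and v: "v \<in> l2" and \<xi>: "\<xi> \<in> l2"
  shows "l2_norm (incr e t u v \<xi>) \<le> (2 * l2_norm u * l2_norm v) * l2_norm \<xi>"
proof -
  have "l2_norm (Ut_m1 e t (tensor v \<xi>)) \<le> 2 * l2_norm (tensor v \<xi>)"
    unfolding Ut_m1_def using l2_norm_diff_triangle[OF Ut_l2[OF t tensor_l2[OF v \<xi>]] tensor_l2[OF v \<xi>]]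
      Ut_norm[OF t tensor_l2[OF v \<xi>]] by simp
  then have "l2_norm u * l2_norm (Ut_m1 e t (tensor v \<xi>)) \<le> l2_norm u * (2 * (l2_norm v * l2_norm \<xi>))"
    using tensor_norm[OF v \<xi>] l2_norm_nonneg[of u] by (simp add: mult_left_mono)
  then show ?thesis using incr_norm[OF assms, of e] by (simp add: ac_simps)
qed

lemma fact_op_eq_incr: assumes t: "0 \<le> t" and p: "p \<in> l2" and w: "w \<in> l2" and \<xi>: "\<xi> \<in> l2"
  shows "fact_op U e 0 t p w \<xi> = (\<lambda>j. incr e t p w \<xi> j + l2_inner p w * \<xi> j)"
proof -
  have "fact_op U e 0 t p w \<xi> = partial_inner p (Ut e t (tensor w \<xi>))"
    unfolding fact_op_def Ut_def[symmetric] by (rule partial_op_char(2)[OF Ut_bdd[OF t] p w \<xi>])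
  moreover have "incr e t p w \<xi> = (\<lambda>j. partial_inner p (Ut e t (tensor w \<xi>)) j - l2_inner p w * \<xi> j)"
    unfolding incr_eq_partial_inner[OF t p w \<xi>] Ut_m1_def
    using partial_inner_diff[OF p Ut_l2[OF t tensor_l2[OF w \<xi>]] tensor_l2[OF w \<xi>]] by (simp add: partial_inner_tensor)
  ultimately show ?thesis by simp
qed

lemma fact_op_l2: assumes "0 \<le> t" "p \<in> l2" "w \<in> l2" "\<xi> \<in> l2" shows "fact_op U e 0 t p w \<xi> \<in> l2"
  unfolding fact_op_eq_incr[OF assms] by (rule l2_add[OF incr_l2[OF assms] l2_scale[OF assms(4)]])

definition incr_word :: "real \<Rightarrow> 'a word \<Rightarrow> ('b \<Rightarrow> complex) \<Rightarrow> ('b \<Rightarrow> complex)" where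
  "incr_word t xs = foldr (\<lambda>(e, u, v) X. fact_m1 U e 0 t u v \<circ> X) xs id"

lemma incr_word_Nil[simp]: "incr_word t [] = id" by (simp add: incr_word_def)

lemma incr_word_Cons[simp]: "incr_word t ((e,u,v) # xs) = incr e t u v \<circ> incr_word t xs" by (simp add: incr_word_def)

lemma incr_word_append: "incr_word t (xs @ ys) = incr_word t xs \<circ> incr_word t ys"
  by (induction xs) (auto simp: incr_word_def)

lemma incr_word_l2: "0 \<le> t \<Longrightarrow> vecs_ok' xs \<Longrightarrow> \<xi> \<in> l2 \<Longrightarrow> incr_word t xs \<xi> \<in> l2"
proof (induction xs)
  case (Cons x xs) then show ?case by (cases x) (auto intro: incr_l2)
qed simp

definition incr_word_bound :: "'a word \<Rightarrow> real" where
  "incr_word_bound xs = prod_list (map (\<lambda>(e,u,v). 2 * l2_norm u * l2_norm v) xs)"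

lemma incr_word_norm: "0 \<le> t \<Longrightarrow> vecs_ok' xs \<Longrightarrow> \<xi> \<in> l2 \<Longrightarrow> l2_norm (incr_word t xs \<xi>) \<le> incr_word_bound xs * l2_norm \<xi>"
proof (induction xs)
  case Nil then show ?case by (simp add: incr_word_bound_def)
next
  case (Cons x xs)
  obtain e u v where x: "x = (e,u,v)" by (cases x)
  have u: "u \<in> l2" and v: "v \<in> l2" and ok: "vecs_ok' xs" using Cons.prems x by auto
  have "l2_norm (incr_word t (x # xs) \<xi>) = l2_norm (incr e t u v (incr_word t xs \<xi>))" using x by simp
  also have "\<dots> \<le> (2 * l2_norm u * l2_norm v) * l2_norm (incr_word t xs \<xi>)"
    by (rule incr_norm_bound[OF Cons.prems(1) u v incr_word_l2[OF Cons.prems(1) ok Cons.prems(3)]])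
  also have "\<dots> \<le> (2 * l2_norm u * l2_norm v) * (incr_word_bound xs * l2_norm \<xi>)"
    using Cons.IH[OF Cons.prems(1) ok Cons.prems(3)] l2_norm_nonneg[of u] l2_norm_nonneg[of v]
    by (intro mult_left_mono) auto
  finally show ?case using x by (simp add: incr_word_bound_def ac_simps)
qed

lemma incr_word_adjoint: "0 \<le> t \<Longrightarrow> vecs_ok' xs \<Longrightarrow> \<xi> \<in> l2 \<Longrightarrow> \<eta> \<in> l2 \<Longrightarrow>
    l2_inner (incr_word t xs \<xi>) \<eta> = l2_inner \<xi> (incr_word t (adjoint_word xs) \<eta>)"
proof (induction xs arbitrary: \<eta>)
  case Nil then show ?case by simp
next
  case (Cons x xs)
  obtain e u v where x: "x = (e,u,v)" by (cases x)
  have u: "u \<in> l2" and v: "v \<in> l2" and ok: "vecs_ok' xs" using Cons.prems x by auto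
  have "l2_inner (incr_word t (x # xs) \<xi>) \<eta> = l2_inner (incr e t u v (incr_word t xs \<xi>)) \<eta>" using x by simp
  also have "\<dots> = l2_inner (incr_word t xs \<xi>) (incr (\<not> e) t v u \<eta>)"
    by (rule incr_adjoint[OF Cons.prems(1) u v incr_word_l2[OF Cons.prems(1) ok Cons.prems(3)] Cons.prems(4)])
  also have "\<dots> = l2_inner \<xi> (incr_word t (adjoint_word xs) (incr (\<not> e) t v u \<eta>))"
    by (rule Cons.IH[OF Cons.prems(1) ok Cons.prems(3) incr_l2[OF Cons.prems(1) v u Cons.prems(4)]])
  finally show ?case using x by (simp add: incr_word_append)
qed

lemma inner_incr_word: "0 \<le> t \<Longrightarrow> vecs_ok' w1 \<Longrightarrow> vecs_ok' w2 \<Longrightarrow>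
    l2_inner (incr_word t w1 \<Omega>) (incr_word t w2 \<Omega>) = expect \<Omega> (incr_word t (adjoint_word w1 @ w2))"
  using incr_word_adjoint[OF _ _ Omega_l2 incr_word_l2[OF _ _ Omega_l2]] by (simp add: expect_def incr_word_append)

definition word_comb :: "real \<Rightarrow> (complex \<times> 'a word) list \<Rightarrow> ('b \<Rightarrow> complex) \<Rightarrow> ('b \<Rightarrow> complex)" where
  "word_comb t L \<xi> = (\<lambda>j. \<Sum>x\<leftarrow>L. (case x of (c, ws) \<Rightarrow> (\<lambda>j. c * incr_word t ws \<xi> j)) j)"

definition words_ok :: "(complex \<times> 'a word) list \<Rightarrow> bool"
  where "words_ok L \<longleftrightarrow> (\<forall>x\<in>set L. vecs_ok' (snd x))"

lemma words_ok_Nil[simp]: "words_ok []" by (simp add: words_ok_def)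

lemma words_ok_Cons[simp]: "words_ok ((c,ws) # L) \<longleftrightarrow> vecs_ok' ws \<and> words_ok L" by (simp add: words_ok_def)

lemma words_ok_incr_expansion: "vecs_ok' ys \<Longrightarrow> words_ok (incr_expansion ys)"
  unfolding words_ok_def using vecs_ok'_incr_expansion by (metis prod.collapse)

lemma word_comb_Nil[simp]: "word_comb t [] \<xi> = (\<lambda>j. 0)" by (simp add: word_comb_def)

lemma word_comb_Cons: "word_comb t ((c,ws) # L) \<xi> = (\<lambda>j. c * incr_word t ws \<xi> j + word_comb t L \<xi> j)"
  by (simp add: word_comb_def)

lemma word_comb_l2: "0 \<le> t \<Longrightarrow> words_ok L \<Longrightarrow> \<xi> \<in> l2 \<Longrightarrow> word_comb t L \<xi> \<in> l2"
proof (induction L)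
  case Nil then show ?case using l2_zero by simp
next
  case (Cons x L)
  then show ?case by (cases x) (auto simp: word_comb_Cons intro!: l2_add l2_scale incr_word_l2)
qed

lemma word_comb_append: "word_comb t (L1 @ L2) \<xi> = (\<lambda>j. word_comb t L1 \<xi> j + word_comb t L2 \<xi> j)"
  by (simp add: word_comb_def)

lemma word_comb_scale: "word_comb t (map (\<lambda>(c,ws). (a * c, ws)) L) \<xi> = (\<lambda>j. a * word_comb t L \<xi> j)"
proof (induction L)
  case (Cons x L) then show ?case by (cases x) (simp add: word_comb_Cons distrib_left mult.assoc)
qed simp

lemma incr_word_comb: assumes t: "0 \<le> t" and p: "p \<in> l2" and w: "w \<in> l2" and \<xi>: "\<xi> \<in> l2"
  shows "words_ok L \<Longrightarrow> incr e t p w (word_comb t L \<xi>) = word_comb t (map (\<lambda>(c,ws). (c, (e,p,w) # ws)) L) \<xi>"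
proof (induction L)
  case Nil then show ?case using bdd_zero[OF incr_bdd[OF t p w]] by simp
next
  case (Cons x L)
  obtain c ws where x: "x = (c, ws)" by (cases x)
  have ok: "vecs_ok' ws" and L: "words_ok L" using Cons.prems x by auto
  have "incr e t p w (word_comb t (x # L) \<xi>) = incr e t p w (\<lambda>j. c * incr_word t ws \<xi> j + word_comb t L \<xi> j)"
    using x by (simp add: word_comb_Cons)
  also have "\<dots> = (\<lambda>j. incr e t p w (\<lambda>j. c * incr_word t ws \<xi> j) j + incr e t p w (word_comb t L \<xi>) j)"
    by (rule bdd_add[OF incr_bdd[OF t p w] l2_scale[OF incr_word_l2[OF t ok \<xi>]] word_comb_l2[OF t L \<xi>]])
  also have "\<dots> = (\<lambda>j. c * incr e t p w (incr_word t ws \<xi>) j + incr e t p w (word_comb t L \<xi>) j)"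
    using bdd_scale[OF incr_bdd[OF t p w] incr_word_l2[OF t ok \<xi>], where c=c] by simp
  finally show ?case using x Cons.IH[OF L] by (simp add: word_comb_Cons)
qed

lemma inner_word_comb: assumes t: "0 \<le> t" and L1: "words_ok L1" and L2: "words_ok L2"
  shows "l2_inner (word_comb t L1 \<Omega>) (word_comb t L2 \<Omega>) =
    (\<Sum>x1\<leftarrow>L1. \<Sum>x2\<leftarrow>L2. cnj (fst x1) * fst x2 * expect \<Omega> (incr_word t (adjoint_word (snd x1) @ snd x2)))"
proof -
  have tl: "\<And>L x. words_ok L \<Longrightarrow> x \<in> set L \<Longrightarrow> (case x of (c, ws) \<Rightarrow> (\<lambda>j. c * incr_word t ws \<Omega> j)) \<in> l2"
    using t Omega_l2 by (auto simp: words_ok_def intro!: l2_scale incr_word_l2 split: prod.split)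
  have "l2_inner (word_comb t L1 \<Omega>) (word_comb t L2 \<Omega>) = (\<Sum>x1\<leftarrow>L1. l2_inner (case x1 of (c, ws) \<Rightarrow> (\<lambda>j. c * incr_word t ws \<Omega> j)) (word_comb t L2 \<Omega>))"
    unfolding word_comb_def[of t L1] by (rule inner_sum_list_left[OF tl[OF L1] word_comb_l2[OF t L2 Omega_l2]])
  also have "\<dots> = (\<Sum>x1\<leftarrow>L1. \<Sum>x2\<leftarrow>L2. cnj (fst x1) * fst x2 * expect \<Omega> (incr_word t (adjoint_word (snd x1) @ snd x2)))"
  proof (rule arg_cong[where f=sum_list], rule map_cong[OF refl])
    fix x1 assume x1: "x1 \<in> set L1"
    obtain c1 w1 where x1e: "x1 = (c1, w1)" by (cases x1)
    have w1: "vecs_ok' w1" using L1 x1 x1e by (auto simp: words_ok_def)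
    have "l2_inner (case x1 of (c, ws) \<Rightarrow> (\<lambda>j. c * incr_word t ws \<Omega> j)) (word_comb t L2 \<Omega>)
        = (\<Sum>x2\<leftarrow>L2. l2_inner (case x1 of (c, ws) \<Rightarrow> (\<lambda>j. c * incr_word t ws \<Omega> j)) (case x2 of (c, ws) \<Rightarrow> (\<lambda>j. c * incr_word t ws \<Omega> j)))"
      unfolding word_comb_def[of t L2] by (rule inner_sum_list_right[OF tl[OF L2] tl[OF L1 x1]])
    also have "\<dots> = (\<Sum>x2\<leftarrow>L2. cnj (fst x1) * fst x2 * expect \<Omega> (incr_word t (adjoint_word (snd x1) @ snd x2)))"
    proof (rule arg_cong[where f=sum_list], rule map_cong[OF refl])
      fix x2 assume x2: "x2 \<in> set L2"
      obtain c2 w2 where x2e: "x2 = (c2, w2)" by (cases x2)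
      have w2: "vecs_ok' w2" using L2 x2 x2e by (auto simp: words_ok_def)
      show "l2_inner (case x1 of (c, ws) \<Rightarrow> (\<lambda>j. c * incr_word t ws \<Omega> j)) (case x2 of (c, ws) \<Rightarrow> (\<lambda>j. c * incr_word t ws \<Omega> j))
          = cnj (fst x1) * fst x2 * expect \<Omega> (incr_word t (adjoint_word (snd x1) @ snd x2))"
        using inner_incr_word[OF t w1 w2] x1e x2e by (simp add: inner_scale_left inner_scale_right)
    qed
    finally show "l2_inner (case x1 of (c, ws) \<Rightarrow> (\<lambda>j. c * incr_word t ws \<Omega> j)) (word_comb t L2 \<Omega>)
        = (\<Sum>x2\<leftarrow>L2. cnj (fst x1) * fst x2 * expect \<Omega> (incr_word t (adjoint_word (snd x1) @ snd x2)))" .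
  qed
  finally show ?thesis .
qed

abbreviation prod_word :: "real \<Rightarrow> 'a word \<Rightarrow> ('b \<Rightarrow> complex) \<Rightarrow> ('b \<Rightarrow> complex)"
  where "prod_word t ys \<equiv> prod_op U (map (\<lambda>(e, p, w). (e, 0, t, p, w)) ys)"

lemma prod_op_Cons: "prod_op U ((e,a,b,p,w) # xs) = fact_op U e a b p w \<circ> prod_op U xs" by (simp add: prod_op_def)

lemma prod_op_Nil: "prod_op U [] = id" by (simp add: prod_op_def)

lemma prod_word_l2: "0 \<le> t \<Longrightarrow> vecs_ok' ys \<Longrightarrow> \<xi> \<in> l2 \<Longrightarrow> prod_word t ys \<xi> \<in> l2"
proof (induction ys)
  case Nil then show ?case by (simp add: prod_op_Nil)
next
  case (Cons y ys) then show ?case by (cases y) (auto simp: prod_op_Cons intro!: fact_op_l2)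
qed

lemma prod_word_expansion: "0 \<le> t \<Longrightarrow> vecs_ok' ys \<Longrightarrow> \<xi> \<in> l2 \<Longrightarrow> prod_word t ys \<xi> = (\<lambda>j. word_comb t (incr_expansion ys) \<xi> j + inner_word ys * \<xi> j)"
proof (induction ys)
  case Nil then show ?case by (simp add: prod_op_Nil inner_word_def)
next
  case (Cons y ys)
  obtain e p w where y: "y = (e,p,w)" by (cases y)
  have t: "0 \<le> t" and \<xi>: "\<xi> \<in> l2" and p: "p \<in> l2" and w: "w \<in> l2" and ok: "vecs_ok' ys"
    using Cons.prems y by auto
  define L where "L = incr_expansion ys"
  have L: "words_ok L" unfolding L_def by (rule words_ok_incr_expansion[OF ok])
  have IH: "prod_word t ys \<xi> = (\<lambda>j. word_comb t L \<xi> j + inner_word ys * \<xi> j)" unfolding L_def by (rule Cons.IH[OF t ok \<xi>])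
  have vl: "word_comb t L \<xi> \<in> l2" by (rule word_comb_l2[OF t L \<xi>])
  have A: "prod_word t ((e,p,w) # ys) \<xi> = (\<lambda>j. incr e t p w (prod_word t ys \<xi>) j + l2_inner p w * prod_word t ys \<xi> j)"
    unfolding prod_op_Cons list.map prod.case comp_def by (rule fact_op_eq_incr[OF t p w prod_word_l2[OF t ok \<xi>]])
  have B0: "incr e t p w (prod_word t ys \<xi>) = (\<lambda>j. incr e t p w (word_comb t L \<xi>) j + inner_word ys * incr e t p w \<xi> j)"
    unfolding IH using bdd_add[OF incr_bdd[OF t p w] vl l2_scale[OF \<xi>, of "inner_word ys"]]
      bdd_scale[OF incr_bdd[OF t p w] \<xi>, where c="inner_word ys"] by simp
  have B: "incr e t p w (prod_word t ys \<xi>) = (\<lambda>j. word_comb t (map (\<lambda>(c,ws). (c, (e,p,w) # ws)) L) \<xi> j + inner_word ys * incr e t p w \<xi> j)"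
    unfolding B0 incr_word_comb[OF t p w \<xi> L] ..
  have 1: "prod_word t ((e,p,w) # ys) \<xi> = (\<lambda>j. word_comb t (map (\<lambda>(c,ws). (c, (e,p,w) # ws)) L) \<xi> j
      + inner_word ys * incr e t p w \<xi> j + l2_inner p w * (word_comb t L \<xi> j + inner_word ys * \<xi> j))"
    unfolding A B unfolding IH ..
  have 2: "word_comb t (incr_expansion ((e,p,w) # ys)) \<xi> = (\<lambda>j. word_comb t (map (\<lambda>(c,ws). (c, (e,p,w) # ws)) L) \<xi> j
      + inner_word ys * incr e t p w \<xi> j + l2_inner p w * word_comb t L \<xi> j)"
  proof -
    have LE: "incr_expansion ((e,p,w) # ys) = map (\<lambda>(c,ws). (c, (e,p,w) # ws)) L @ [(inner_word ys, [(e,p,w)])]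
        @ map (\<lambda>(c,ws). (l2_inner p w * c, ws)) L" using y by (simp add: L_def)
    have S: "word_comb t [(inner_word ys, [(e,p,w)])] \<xi> = (\<lambda>j. inner_word ys * incr e t p w \<xi> j)" by (simp add: word_comb_Cons)
    show ?thesis unfolding LE word_comb_append word_comb_scale S by (simp add: add.assoc)
  qed
  have 3: "inner_word ((e,p,w) # ys) = l2_inner p w * inner_word ys" using y by simp
  have "prod_word t ((e,p,w) # ys) \<xi> = (\<lambda>j. word_comb t (incr_expansion ((e,p,w) # ys)) \<xi> j + inner_word ((e,p,w) # ys) * \<xi> j)"
    by (rule trans[OF 1]) (unfold 2 3, simp add: algebra_simps)
  then show ?case unfolding y .
qed

lemma prod_m1_expansion: "0 \<le> t \<Longrightarrow> vecs_ok' ys \<Longrightarrow> \<xi> \<in> l2 \<Longrightarrow> prod_m1 U 0 t ys \<xi> = word_comb t (incr_expansion ys) \<xi>"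
  unfolding prod_m1_def using prod_word_expansion[of t ys \<xi>] by (simp add: inner_word_def)

lemma Tsg_char:
  assumes t: "0 \<le> t" and u: "u \<in> l2" and v: "v \<in> l2"
  shows "Tsg U \<Omega> t v \<in> l2"
    and "l2_inner u (Tsg U \<Omega> t v) = l2_inner (tensor u \<Omega>) (U 0 t (tensor v \<Omega>))"
proof -
  have Ub: "bdd_op (U 0 t)" using unitary_bdd[OF U_unitary[OF t]] .
  have expect_eq: "expect \<Omega> (fact_op U False 0 t u v) = l2_inner (tensor u \<Omega>) (U 0 t (tensor v \<Omega>))"
    if "u \<in> l2" "v \<in> l2" for u v
    unfolding expect_def fact_op_def Ueps_def using partial_op_inner[OF Ub that Omega_l2 Omega_l2] by simp
  have "\<forall>u\<in>l2. \<forall>v\<in>l2. l2_inner u (partial_inner2 \<Omega> (U 0 t (tensor v \<Omega>))) = expect \<Omega> (fact_op U False 0 t u v)"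
    using partial_inner2_inner[OF Omega_l2 _ bdd_l2[OF Ub tensor_l2[OF _ Omega_l2]]] expect_eq by simp
  then have "\<exists>B. bdd_op B \<and> (\<forall>u\<in>l2. \<forall>v\<in>l2. l2_inner u (B v) = expect \<Omega> (fact_op U False 0 t u v))"
    using partial_inner2_tensor_bdd[OF Ub Omega_l2] by blast
  then have "bdd_op (Tsg U \<Omega> t)
      \<and> (\<forall>u\<in>l2. \<forall>v\<in>l2. l2_inner u (Tsg U \<Omega> t v) = expect \<Omega> (fact_op U False 0 t u v))"
    unfolding Tsg_def by (rule someI_ex)
  then show "Tsg U \<Omega> t v \<in> l2" and "l2_inner u (Tsg U \<Omega> t v) = l2_inner (tensor u \<Omega>) (U 0 t (tensor v \<Omega>))"
    using bdd_l2 expect_eq u v by auto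
qed

lemma inner_Omega_Omega: "l2_inner \<Omega> \<Omega> = 1"
  using inner_self[OF Omega_l2] Omega_norm by simp

lemma domG_increment_bound: assumes "v \<in> domG U \<Omega>"
  shows "\<exists>K. \<forall>\<^sub>F t in at_right 0. 0 < t \<and> l2_norm (\<lambda>i. Tsg U \<Omega> t v i - v i) \<le> K * t"
proof -
  obtain g where v: "v \<in> l2" and g: "g \<in> l2"
    and lim: "((\<lambda>t. l2_norm (\<lambda>i. (Tsg U \<Omega> t v i - v i) / complex_of_real t - g i)) \<longlongrightarrow> 0) (at_right 0)"
    using assms unfolding domG_def by blast
  have ev1: "\<forall>\<^sub>F t in at_right 0. l2_norm (\<lambda>i. (Tsg U \<Omega> t v i - v i) / complex_of_real t - g i) < 1"
    using order_tendstoD(2)[OF lim, of 1] by simp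
  have ev2: "\<forall>\<^sub>F t in at_right (0::real). 0 < t" by (rule eventually_at_right_less)
  show ?thesis
  proof (intro exI, rule eventually_mono[OF eventually_conj[OF ev1 ev2]], elim conjE, intro conjI)
    fix t :: real assume n: "l2_norm (\<lambda>i. (Tsg U \<Omega> t v i - v i) / complex_of_real t - g i) < 1" and t: "0 < t"
    then show "0 < t" by simp
    define h where "h = (\<lambda>i. Tsg U \<Omega> t v i - v i)"
    have hl: "h \<in> l2" unfolding h_def by (rule l2_diff[OF Tsg_char(1)[OF _ v v] v]) (use t in simp)
    define q where "q = (\<lambda>i. h i / complex_of_real t - g i)"
    have hs: "(\<lambda>i. h i / complex_of_real t) \<in> l2" using l2_scale[OF hl, of "1 / complex_of_real t"] by simp
    have ql: "q \<in> l2" unfolding q_def by (rule l2_diff[OF hs g])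
    have "(\<lambda>i. h i / complex_of_real t) = (\<lambda>i. q i + g i)" by (simp add: q_def)
    then have "l2_norm (\<lambda>i. h i / complex_of_real t) \<le> l2_norm q + l2_norm g"
      using l2_norm_triangle[OF ql g] by simp
    also have "\<dots> \<le> 1 + l2_norm g" using n by (simp add: q_def h_def)
    finally have a: "l2_norm (\<lambda>i. h i / complex_of_real t) \<le> 1 + l2_norm g" .
    have "h = (\<lambda>i. complex_of_real t * (h i / complex_of_real t))" using t by auto
    then have "l2_norm h = t * l2_norm (\<lambda>i. h i / complex_of_real t)"
      using l2_norm_scale[OF hs, of "complex_of_real t"] t by simp
    also have "\<dots> \<le> t * (1 + l2_norm g)" using a t by simp
    finally show "l2_norm (\<lambda>i. Tsg U \<Omega> t v i - v i) \<le> (1 + l2_norm g) * t" by (simp add: h_def mult.commute)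
  qed
qed

lemma Ut_m1_vacuum_norm_sq_le: assumes v: "v \<in> l2" and t: "0 < t"
  shows "(l2_norm (Ut_m1 False t (tensor v \<Omega>)))\<^sup>2 \<le> 2 * (l2_norm v * l2_norm (\<lambda>i. Tsg U \<Omega> t v i - v i))"
proof -
  have t0: "0 \<le> t" using t by simp
  have vO: "tensor v \<Omega> \<in> l2" by (rule tensor_l2[OF v Omega_l2])
  have Tl: "Tsg U \<Omega> t v \<in> l2" by (rule Tsg_char(1)[OF t0 v v])
  have "l2_inner (tensor v \<Omega>) (Ut_m1 False t (tensor v \<Omega>))
      = l2_inner (tensor v \<Omega>) (Ut False t (tensor v \<Omega>)) - l2_inner (tensor v \<Omega>) (tensor v \<Omega>)"
    unfolding Ut_m1_apply by (rule inner_diff_right[OF vO Ut_l2[OF t0 vO] vO])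
  also have "\<dots> = l2_inner v (Tsg U \<Omega> t v) - l2_inner v v"
    using Tsg_char(2)[OF t0 v v] tensor_inner[OF v Omega_l2 v Omega_l2] inner_Omega_Omega by (simp add: Ut_def Ueps_def)
  also have "\<dots> = l2_inner v (\<lambda>i. Tsg U \<Omega> t v i - v i)" by (rule inner_diff_right[OF v Tl v, symmetric])
  finally have e: "l2_inner (tensor v \<Omega>) (Ut_m1 False t (tensor v \<Omega>)) = l2_inner v (\<lambda>i. Tsg U \<Omega> t v i - v i)" .
  have "(l2_norm (Ut_m1 False t (tensor v \<Omega>)))\<^sup>2 = - 2 * Re (l2_inner (tensor v \<Omega>) (Ut_m1 False t (tensor v \<Omega>)))"
    by (rule Ut_m1_norm_sq[OF t0 vO])
  also have "\<dots> \<le> 2 * cmod (l2_inner v (\<lambda>i. Tsg U \<Omega> t v i - v i))" unfolding e by (rule minus_Re_le_cmod)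
  also have "\<dots> \<le> 2 * (l2_norm v * l2_norm (\<lambda>i. Tsg U \<Omega> t v i - v i))"
    using cauchy_schwarz[OF v l2_diff[OF Tl v]] by simp
  finally show ?thesis .
qed

lemma moment_sq_le_moment3_product:
  assumes t: "0 \<le> t"
    and ok: "vecs_ok' ((e1,u1,v1) # (e2,u2,v2) # mid @ [(ea,ua,va), (eb,ub,vb)])"
  shows "(cmod (expect \<Omega> (incr_word t ((e1,u1,v1) # (e2,u2,v2) # mid @ [(ea,ua,va), (eb,ub,vb)]))))\<^sup>2
    \<le> 4 * (incr_word_bound mid)\<^sup>2 * (l2_norm v2)\<^sup>2 * (l2_norm ua)\<^sup>2
       * (cmod (expect \<Omega> (incr_word t [(e1,u1,v1), (\<not> e2,u2,u2), (\<not> e1,v1,u1)]))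
          * cmod (expect \<Omega> (incr_word t [(\<not> eb,vb,ub), (ea,va,va), (eb,ub,vb)])))"
    (is "(cmod ?E)\<^sup>2 \<le> _ * (cmod ?E1 * cmod ?E2)")
proof -
  have l: "u1 \<in> l2" "v1 \<in> l2" "u2 \<in> l2" "v2 \<in> l2" "ua \<in> l2" "va \<in> l2" "ub \<in> l2" "vb \<in> l2"
    and mid: "vecs_ok' mid" using ok by auto
  define \<alpha> where "\<alpha> = incr (\<not> e1) t v1 u1 \<Omega>"
  define \<beta> where "\<beta> = incr (\<not> e2) t v2 u2 \<alpha>"
  define \<zeta> where "\<zeta> = incr eb t ub vb \<Omega>"
  define \<gamma> where "\<gamma> = incr ea t ua va \<zeta>"
  have \<alpha>: "\<alpha> \<in> l2" unfolding \<alpha>_def by (rule incr_l2[OF t l(2,1) Omega_l2])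
  have \<beta>: "\<beta> \<in> l2" unfolding \<beta>_def by (rule incr_l2[OF t l(4,3) \<alpha>])
  have \<zeta>: "\<zeta> \<in> l2" unfolding \<zeta>_def by (rule incr_l2[OF t l(7,8) Omega_l2])
  have \<gamma>: "\<gamma> \<in> l2" unfolding \<gamma>_def by (rule incr_l2[OF t l(5,6) \<zeta>])
  have mid\<gamma>: "incr_word t mid \<gamma> \<in> l2" by (rule incr_word_l2[OF t mid \<gamma>])
  have "?E = l2_inner \<Omega> (incr e1 t u1 v1 (incr e2 t u2 v2 (incr_word t mid \<gamma>)))"
    by (simp add: expect_def incr_word_append \<gamma>_def \<zeta>_def)
  also have "\<dots> = l2_inner \<alpha> (incr e2 t u2 v2 (incr_word t mid \<gamma>))"
    unfolding \<alpha>_def by (rule incr_adjoint'[OF t l(1,2) Omega_l2 incr_l2[OF t l(3,4) mid\<gamma>]])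
  also have "\<dots> = l2_inner \<beta> (incr_word t mid \<gamma>)"
    unfolding \<beta>_def by (rule incr_adjoint'[OF t l(3,4) \<alpha> mid\<gamma>])
  finally have E: "?E = l2_inner \<beta> (incr_word t mid \<gamma>)" .
  have E1: "l2_inner \<alpha> (incr (\<not> e2) t u2 u2 \<alpha>) = ?E1"
    using incr_adjoint[OF t l(2,1) Omega_l2 incr_l2[OF t l(3,3) \<alpha>], of "\<not> e1"]
    by (simp add: expect_def \<alpha>_def)
  have E2: "l2_inner \<zeta> (incr ea t va va \<zeta>) = ?E2"
    using incr_adjoint[OF t l(7,8) Omega_l2 incr_l2[OF t l(6,6) \<zeta>]] by (simp add: expect_def \<zeta>_def)
  have \<beta>_bound: "(l2_norm \<beta>)\<^sup>2 \<le> (l2_norm v2)\<^sup>2 * (2 * cmod ?E1)"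
    using incr_norm_sq_le_cmod[OF t l(4,3) \<alpha>, of "\<not> e2"] unfolding E1 \<beta>_def .
  have \<gamma>_bound: "(l2_norm \<gamma>)\<^sup>2 \<le> (l2_norm ua)\<^sup>2 * (2 * cmod ?E2)"
    using incr_norm_sq_le_cmod[OF t l(5,6) \<zeta>, of ea] unfolding E2 \<gamma>_def .
  have "cmod ?E \<le> l2_norm \<beta> * l2_norm (incr_word t mid \<gamma>)"
    unfolding E by (rule cauchy_schwarz[OF \<beta> mid\<gamma>])
  also have "\<dots> \<le> l2_norm \<beta> * (incr_word_bound mid * l2_norm \<gamma>)"
    by (rule mult_left_mono[OF incr_word_norm[OF t mid \<gamma>] l2_norm_nonneg])
  finally have "(cmod ?E)\<^sup>2 \<le> (l2_norm \<beta> * (incr_word_bound mid * l2_norm \<gamma>))\<^sup>2"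
    by (rule power_mono[OF _ norm_ge_zero])
  also have "\<dots> = (incr_word_bound mid)\<^sup>2 * ((l2_norm \<beta>)\<^sup>2 * (l2_norm \<gamma>)\<^sup>2)"
    by (simp add: power_mult_distrib)
  also have "\<dots> \<le> (incr_word_bound mid)\<^sup>2
      * (((l2_norm v2)\<^sup>2 * (2 * cmod ?E1)) * ((l2_norm ua)\<^sup>2 * (2 * cmod ?E2)))"
    by (intro mult_left_mono mult_mono \<beta>_bound \<gamma>_bound) auto
  finally show ?thesis by (simp add: ac_simps)
qed

lemma quadratic_form_expansion:
  assumes t: "0 \<le> t" and u: "u \<in> l2" and ok: "vecs_ok' ys"
  shows "l2_inner (prod_m1 U 0 t ys \<Omega>) (incr False t u u (prod_m1 U 0 t ys \<Omega>))
    = (\<Sum>x1\<leftarrow>incr_expansion ys. \<Sum>x2\<leftarrow>incr_expansion ys. cnj (fst x1) * fst x2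
         * expect \<Omega> (incr_word t (adjoint_word (snd x1) @ (False,u,u) # snd x2)))"
proof -
  define L where "L = incr_expansion ys"
  have L: "words_ok L" unfolding L_def by (rule words_ok_incr_expansion[OF ok])
  define L' where "L' = map (\<lambda>(c,ws). (c, (False,u,u) # ws)) L"
  have L': "words_ok L'" using L u unfolding L'_def words_ok_def by auto
  have "l2_inner (prod_m1 U 0 t ys \<Omega>) (incr False t u u (prod_m1 U 0 t ys \<Omega>))
      = l2_inner (word_comb t L \<Omega>) (word_comb t L' \<Omega>)"
    unfolding prod_m1_expansion[OF t ok Omega_l2] L_def[symmetric] L'_def
      incr_word_comb[OF t u u Omega_l2 L] ..
  also have "\<dots> = (\<Sum>x1\<leftarrow>L. \<Sum>x2\<leftarrow>L'. cnj (fst x1) * fst x2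
      * expect \<Omega> (incr_word t (adjoint_word (snd x1) @ snd x2)))"
    by (rule inner_word_comb[OF t L L'])
  finally show ?thesis by (simp add: L'_def L_def case_prod_unfold o_def)
qed

lemma prod_m1_l2: "0 \<le> t \<Longrightarrow> vecs_ok' ys \<Longrightarrow> \<xi> \<in> l2 \<Longrightarrow> prod_m1 U 0 t ys \<xi> \<in> l2"
  using prod_m1_expansion word_comb_l2 words_ok_incr_expansion by simp

lemma adjoint_sum_sq_bound:
  assumes t: "0 < t" and u: "u \<in> l2" and v: "v \<in> l2" and Y: "Y \<in> l2"
    and K: "l2_norm (\<lambda>i. Tsg U \<Omega> t v i - v i) \<le> K * t"
  shows "(cmod (l2_inner (incr True t u v \<Omega>) Y + l2_inner (incr False t u v \<Omega>) Y))\<^sup>2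
    \<le> 4 * l2_norm v * K * t * cmod (l2_inner Y (incr False t u u Y))"
proof -
  have t0: "0 \<le> t" using t by simp
  have uY: "tensor u Y \<in> l2" by (rule tensor_l2[OF u Y])
  have v\<Omega>: "tensor v \<Omega> \<in> l2" by (rule tensor_l2[OF v Omega_l2])
  define a where "a = Ut_m1 False t (tensor v \<Omega>)"
  define b where "b = Ut_m1 False t (tensor u Y)"
  have sum: "l2_inner (incr True t u v \<Omega>) Y + l2_inner (incr False t u v \<Omega>) Y = - l2_inner a b"
    using incr_adjoint[OF t0 u v Omega_l2 Y] inner_incr[OF t0 v u Omega_l2 Y]
      inner_Ut_m1_sum_adjoint[OF t0 v\<Omega> uY] by (simp add: a_def b_def add.commute)
  have a_bound: "(l2_norm a)\<^sup>2 \<le> 2 * l2_norm v * K * t"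
    using Ut_m1_vacuum_norm_sq_le[OF v t] mult_left_mono[OF K l2_norm_nonneg[of v]]
    by (simp add: a_def mult.assoc)
  have "(l2_norm b)\<^sup>2 = - 2 * Re (l2_inner (tensor u Y) b)"
    unfolding b_def by (rule Ut_m1_norm_sq[OF t0 uY])
  also have "\<dots> \<le> 2 * cmod (l2_inner Y (incr False t u u Y))"
    using minus_Re_le_cmod inner_incr[OF t0 u u Y Y] by (simp add: b_def)
  finally have b_bound: "(l2_norm b)\<^sup>2 \<le> 2 * cmod (l2_inner Y (incr False t u u Y))" .
  have "(cmod (l2_inner a b))\<^sup>2 \<le> (l2_norm a)\<^sup>2 * (l2_norm b)\<^sup>2"
    using cauchy_schwarz[OF Ut_m1_l2[OF t0 v\<Omega>] Ut_m1_l2[OF t0 uY]]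
    by (metis a_def b_def norm_ge_zero power_mono power_mult_distrib)
  also have "\<dots> \<le> (2 * l2_norm v * K * t) * (2 * cmod (l2_inner Y (incr False t u u Y)))"
    by (rule mult_mono[OF a_bound b_bound order_trans[OF zero_le_power2 a_bound] zero_le_power2])
  finally show ?thesis unfolding sum by simp
qed

end

section \<open>Small-time asymptotics under condition (C)\<close>

locale unitary_evolution_C = unitary_evolution +
  assumes C_moment3: "C U \<Omega>"
begin

lemma moment3_little_o:
  assumes ok: "vecs_ok' xs" and len: "length xs = 3"
  shows "((\<lambda>t. expect \<Omega> (incr_word t xs) / complex_of_real t) \<longlongrightarrow> 0) (at_right 0)"
proof -
  obtain a b c where abc: "xs = [a,b,c]" using len
    by (auto simp: numeral_3_eq_3 length_Suc_conv)
  obtain e1 u1 v1 e2 u2 v2 e3 u3 v3 where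
    x: "a = (e1,u1,v1)" "b = (e2,u2,v2)" "c = (e3,u3,v3)" by (cases a, cases b, cases c) auto
  have l: "u1 \<in> l2" "v1 \<in> l2" "u2 \<in> l2" "v2 \<in> l2" "u3 \<in> l2" "v3 \<in> l2" using ok abc x by auto
  have "((\<lambda>t. expect \<Omega> (incr e1 t u1 v1 \<circ> incr e2 t u2 v2 \<circ> incr e3 t u3 v3) / complex_of_real t) \<longlongrightarrow> 0) (at_right 0)"
    using C_moment3 l unfolding C_def by blast
  moreover have "incr_word t xs = incr e1 t u1 v1 \<circ> incr e2 t u2 v2 \<circ> incr e3 t u3 v3" for t
    using abc x by (simp add: o_assoc)
  ultimately show ?thesis by simp
qed

lemma moment_little_o:
  assumes ok: "vecs_ok' xs" and len: "3 \<le> length xs"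
  shows "((\<lambda>t. expect \<Omega> (incr_word t xs) / complex_of_real t) \<longlongrightarrow> 0) (at_right 0)"
proof (cases "length xs = 3")
  case True then show ?thesis using moment3_little_o[OF ok] by simp
next
  case False
  obtain x1 x2 rest where xs': "xs = x1 # x2 # rest"
    using len by (auto simp: numeral_3_eq_3 Suc_le_length_iff)
  then have "2 \<le> length rest" using len False by simp
  then obtain mid xa xb where "rest = mid @ [xa, xb]" by (rule obtain_last2)
  moreover obtain e1 u1 v1 e2 u2 v2 ea ua va eb ub vb
    where "x1 = (e1,u1,v1)" "x2 = (e2,u2,v2)" "xa = (ea,ua,va)" "xb = (eb,ub,vb)"
    by (cases x1; cases x2; cases xa; cases xb) blast
  ultimately have xs: "xs = (e1,u1,v1) # (e2,u2,v2) # mid @ [(ea,ua,va), (eb,ub,vb)]"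
    using xs' by simp
  define E where "E ws t = expect \<Omega> (incr_word t ws) / complex_of_real t" for ws t
  define ws1 where "ws1 = [(e1,u1,v1), (\<not> e2,u2,u2), (\<not> e1,v1,u1)]"
  define ws2 where "ws2 = [(\<not> eb,vb,ub), (ea,va,va), (eb,ub,vb)]"
  define K where "K = 4 * (incr_word_bound mid)\<^sup>2 * (l2_norm v2)\<^sup>2 * (l2_norm ua)\<^sup>2"
  have T1: "(E ws1 \<longlongrightarrow> 0) (at_right 0)" unfolding E_def
    by (rule moment3_little_o) (use ok in \<open>simp_all add: xs ws1_def\<close>)
  have T2: "(E ws2 \<longlongrightarrow> 0) (at_right 0)" unfolding E_def
    by (rule moment3_little_o) (use ok in \<open>simp_all add: xs ws2_def\<close>)
  have lim: "((\<lambda>t. K * (norm (E ws1 t) * norm (E ws2 t))) \<longlongrightarrow> 0) (at_right 0)"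
    by (rule tendsto_mult_right_zero[OF tendsto_mult_zero[OF tendsto_norm_zero[OF T1] tendsto_norm_zero[OF T2]]])
  have "(norm (E xs t))\<^sup>2 \<le> K * (norm (E ws1 t) * norm (E ws2 t))" if t: "0 < t" for t
  proof -
    have "(cmod (expect \<Omega> (incr_word t xs)))\<^sup>2 / t\<^sup>2
        \<le> K * (cmod (expect \<Omega> (incr_word t ws1)) * cmod (expect \<Omega> (incr_word t ws2))) / t\<^sup>2"
      using moment_sq_le_moment3_product[of t] ok t
      unfolding xs ws1_def ws2_def K_def by (intro divide_right_mono) auto
    then show ?thesis using t by (simp add: E_def norm_divide power_divide power2_eq_square)
  qed
  then have "\<forall>\<^sub>F t in at_right 0. (norm (E xs t))\<^sup>2 \<le> K * (norm (E ws1 t) * norm (E ws2 t))"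
    using eventually_at_right_less[of 0] by (auto elim!: eventually_mono)
  from tendsto_zero_if_sq_bounded[OF this lim] show ?thesis by (simp add: E_def)
qed

lemma quadratic_form_little_o:
  assumes u: "u \<in> l2" and ok: "vecs_ok' ys"
  shows "((\<lambda>t. l2_inner (prod_m1 U 0 t ys \<Omega>) (incr False t u u (prod_m1 U 0 t ys \<Omega>))
    / complex_of_real t) \<longlongrightarrow> 0) (at_right 0)"
proof -
  have "((\<lambda>t. \<Sum>x1\<leftarrow>incr_expansion ys. \<Sum>x2\<leftarrow>incr_expansion ys. cnj (fst x1) * fst x2
      * (expect \<Omega> (incr_word t (adjoint_word (snd x1) @ (False,u,u) # snd x2)) / complex_of_real t))
      \<longlongrightarrow> 0) (at_right 0)"
  proof (intro tendsto_sum_list_zero tendsto_mult_right_zero moment_little_o)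
    fix x1 x2 assume x1: "x1 \<in> set (incr_expansion ys)" and x2: "x2 \<in> set (incr_expansion ys)"
    then show "vecs_ok' (adjoint_word (snd x1) @ (False, u, u) # snd x2)"
      using ok u vecs_ok'_incr_expansion vecs_ok'_adjoint_word by (metis prod.collapse vecs_ok'_Cons vecs_ok'_append)
    have "snd x1 \<noteq> []" "snd x2 \<noteq> []" using x1 x2 incr_expansion_words by (metis prod.collapse)+
    then show "3 \<le> length (adjoint_word (snd x1) @ (False, u, u) # snd x2)"
      by (auto simp: neq_Nil_conv)
  qed
  moreover have "\<forall>\<^sub>F t in at_right 0. (\<Sum>x1\<leftarrow>incr_expansion ys. \<Sum>x2\<leftarrow>incr_expansion ys. cnj (fst x1) * fst x2
      * (expect \<Omega> (incr_word t (adjoint_word (snd x1) @ (False,u,u) # snd x2)) / complex_of_real t))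
    = l2_inner (prod_m1 U 0 t ys \<Omega>) (incr False t u u (prod_m1 U 0 t ys \<Omega>)) / complex_of_real t"
    using eventually_at_right_less[of 0]
    by eventually_elim (simp add: quadratic_form_expansion[OF _ u ok] sum_list_div)
  ultimately show ?thesis by (rule Lim_transform_eventually)
qed

lemma adjoint_sum_little_o:
  assumes u: "u \<in> l2" and vG: "v \<in> domG U \<Omega>" and ok: "vecs_ok' ys"
  shows "((\<lambda>t. l2_inner (incr True t u v \<Omega>) (prod_m1 U 0 t ys \<Omega>) / complex_of_real t
    + l2_inner (incr False t u v \<Omega>) (prod_m1 U 0 t ys \<Omega>) / complex_of_real t) \<longlongrightarrow> 0) (at_right 0)"
proof -
  have v: "v \<in> l2" using vG by (simp add: domG_def)
  obtain K where K: "\<forall>\<^sub>F t in at_right 0. 0 < t \<and> l2_norm (\<lambda>i. Tsg U \<Omega> t v i - v i) \<le> K * t"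
    using domG_increment_bound[OF vG] by blast
  define Y where "Y t = prod_m1 U 0 t ys \<Omega>" for t
  define Q where "Q t = l2_inner (Y t) (incr False t u u (Y t)) / complex_of_real t" for t
  have "(norm (l2_inner (incr True t u v \<Omega>) (Y t) / complex_of_real t
      + l2_inner (incr False t u v \<Omega>) (Y t) / complex_of_real t))\<^sup>2 \<le> 4 * l2_norm v * K * cmod (Q t)"
    if t: "0 < t" and Kt: "l2_norm (\<lambda>i. Tsg U \<Omega> t v i - v i) \<le> K * t" for t
  proof -
    have "(cmod (l2_inner (incr True t u v \<Omega>) (Y t) + l2_inner (incr False t u v \<Omega>) (Y t)))\<^sup>2 / t\<^sup>2
        \<le> 4 * l2_norm v * K * t * cmod (l2_inner (Y t) (incr False t u u (Y t))) / t\<^sup>2"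
      using adjoint_sum_sq_bound[OF t u v _ Kt] prod_m1_l2[OF _ ok Omega_l2] t
      unfolding Y_def by (intro divide_right_mono) auto
    then show ?thesis
      using t by (simp add: Q_def norm_divide power_divide power2_eq_square add_divide_distrib[symmetric])
  qed
  then have "\<forall>\<^sub>F t in at_right 0. (norm (l2_inner (incr True t u v \<Omega>) (Y t) / complex_of_real t
      + l2_inner (incr False t u v \<Omega>) (Y t) / complex_of_real t))\<^sup>2 \<le> 4 * l2_norm v * K * cmod (Q t)"
    using K by (auto elim!: eventually_mono)
  moreover have "((\<lambda>t. 4 * l2_norm v * K * cmod (Q t)) \<longlongrightarrow> 0) (at_right 0)"
    using quadratic_form_little_o[OF u ok] unfolding Q_def Y_def
    by (intro tendsto_mult_right_zero tendsto_norm_zero)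
  ultimately show ?thesis unfolding Y_def by (rule tendsto_zero_if_sq_bounded)
qed

end

theorem lemma3p4:
  fixes U :: "('a::countable, 'b::countable) evol" and \<Omega> :: "'b \<Rightarrow> complex"
  assumes unitary: "unitary_family U"
    and Omega: "\<Omega> \<in> l2" "l2_norm \<Omega> = 1"
    and "A1 U" and "A2i U" and "A2ii U \<Omega>" and "A3 U \<Omega>" and "B' U \<Omega>" and "C U \<Omega>"
  shows "(\<forall>xs. 3 \<le> length xs \<longrightarrow> vecs_ok' xs \<longrightarrow>
            ((\<lambda>t. expect \<Omega> (foldr (\<lambda>(e, u, v) X. fact_m1 U e 0 t u v \<circ> X) xs id)
                  / complex_of_real t) \<longlongrightarrow> 0) (at_right 0))
       \<and> (\<forall>u v e ys. u \<in> l2 \<longrightarrow> v \<in> domG U \<Omega> \<longrightarrow> ys \<noteq> [] \<longrightarrow> vecs_ok' ys \<longrightarrow>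
            (\<forall>L. ((\<lambda>t. l2_inner (fact_m1 U e 0 t u v \<Omega>) (prod_m1 U 0 t ys \<Omega>) / complex_of_real t)
                     \<longlongrightarrow> (if e then - L else L)) (at_right 0)
               \<longleftrightarrow> ((\<lambda>t. l2_inner (fact_m1 U False 0 t u v \<Omega>) (prod_m1 U 0 t ys \<Omega>) / complex_of_real t)
                     \<longlongrightarrow> L) (at_right 0)))"
proof -
  interpret unitary_evolution_C U \<Omega>
    using unitary Omega \<open>C U \<Omega>\<close> by unfold_locales
  show ?thesis
  proof (intro conjI allI impI)
    fix xs :: "'a word"
    assume "3 \<le> length xs" "vecs_ok' xs"
    then show "((\<lambda>t. expect \<Omega> (foldr (\<lambda>(e, u, v) X. fact_m1 U e 0 t u v \<circ> X) xs id)
        / complex_of_real t) \<longlongrightarrow> 0) (at_right 0)"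
      using moment_little_o by (simp add: incr_word_def)
  next
    fix u v :: "'a \<Rightarrow> complex" and e L
      and ys :: "'a word"
    assume "u \<in> l2" "v \<in> domG U \<Omega>" "ys \<noteq> []" "vecs_ok' ys"
    from adjoint_sum_little_o[OF \<open>u \<in> l2\<close> \<open>v \<in> domG U \<Omega>\<close> \<open>vecs_ok' ys\<close>] show "((\<lambda>t. l2_inner (fact_m1 U e 0 t u v \<Omega>) (prod_m1 U 0 t ys \<Omega>)
        / complex_of_real t) \<longlongrightarrow> (if e then - L else L)) (at_right 0)
      \<longleftrightarrow> ((\<lambda>t. l2_inner (fact_m1 U False 0 t u v \<Omega>) (prod_m1 U 0 t ys \<Omega>)
        / complex_of_real t) \<longlongrightarrow> L) (at_right 0)"
      by (cases e) (simp_all add: tendsto_minus_iff_if_sum_tendsto_zero)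
  qed
qed

end
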